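(* Let $\Sigma,\hat{\Sigma} \in \mathbb{R}^{p \times p}$ be symmetric, with eigenvalues $\lambda_1 \geq \ldots \geq \lambda_p$ and $\hat{\lambda}_1 \geq \ldots \geq \hat{\lambda}_p$ respectively (listed with multiplicity). Fix $1 \leq r \leq s \leq p$ and assume that $\min(\lambda_{r-1} - \lambda_r,\lambda_s - \lambda_{s+1}) > 0$, where $\lambda_0 := \infty$ and $\lambda_{p+1} := -\infty$. Let $d := s - r + 1$, and let $V = (v_r,v_{r+1},\ldots,v_s) \in \mathbb{R}^{p \times d}$ and $\hat{V} = (\hat{v}_r,\hat{v}_{r+1},\ldots,\hat{v}_s) \in \mathbb{R}^{p \times d}$ have orthonormal columns satisfying $\Sigma v_j = \lambda_j v_j$ and $\hat{\Sigma}\hat{v}_j = \hat{\lambda}_j \hat{v}_j$ for $j= r,r+1,\ldots,s$. Then \[ \|\sin \Theta(\hat{V},V)\|_{\mathrm{F}} \leq \frac{2\min(d^{1/2}\|\hat{\Sigma} - \Sigma\|_{\mathrm{op}},\|\hat{\Sigma} - \Sigma\|_\mathrm{F})}{\min(\lambda_{r-1} - \lambda_r,\lambda_s - \lambda_{s+1})}. \] Moreover, there exists an orthogonal matrix $\hat{O} \in \mathbb{R}^{d \times d}$ such that \[ \|\hat{V}\hat{O} - V\|_{\mathrm{F}} \leq \frac{2^{3/2}\min(d^{1/2}\|\hat{\Sigma} - \Sigma\|_{\mathrm{op}},\|\hat{\Sigma} - \Sigma\|_\mathrm{F})}{\min(\lambda_{r-1} - \lambda_r,\lambda_s - \lambda_{s+1})}.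 \]
   Context: $\|\cdot\|_{\mathrm{F}}$ denotes the Frobenius norm and $\|\cdot\|_{\mathrm{op}}$ the operator (spectral) norm. For $V,\hat{V} \in \mathbb{R}^{p \times d}$ with orthonormal columns, let $\sigma_1 \geq \ldots \geq \sigma_d$ be the singular values of $\hat{V}^T V$; the principal angles between the column spaces are $\theta_j = \cos^{-1}\sigma_j$, $\Theta(\hat{V},V)$ is the $d \times d$ diagonal matrix with diagonal entries $\theta_1,\ldots,\theta_d$, and $\sin\Theta(\hat{V},V)$ is defined entrywise (so $\|\sin\Theta(\hat{V},V)\|_{\mathrm{F}}^2 = d - \|\hat{V}^TV\|_{\mathrm{F}}^2$). *)

theory Defs
  imports "Jordan_Normal_Form.Char_Poly" "HOL-Library.Extended_Real"
begin

definition vnorm :: "real vec \<Rightarrow> real" where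
  "vnorm x = sqrt (x \<bullet> x)"

definition fro_norm :: "real mat \<Rightarrow> real" where
  "fro_norm A = sqrt (\<Sum>i<dim_row A. \<Sum>j<dim_col A. (A $$ (i,j))\<^sup>2)"

definition op_norm :: "real mat \<Rightarrow> real" where
  "op_norm A = Sup {vnorm (A *\<^sub>v x) | x. x \<in> carrier_vec (dim_col A) \<and> vnorm x = 1}"

definition orthonormal_cols :: "real mat \<Rightarrow> bool" where
  "orthonormal_cols V \<longleftrightarrow> transpose_mat V * V = 1\<^sub>m (dim_col V)"

definition singular_values :: "real mat \<Rightarrow> nat \<Rightarrow> real" where
  "singular_values M = (SOME \<sigma>.
     (\<forall>i j. i \<le> j \<longrightarrow> j < dim_col M \<longrightarrow> \<sigma> j \<le> \<sigma> i) \<and>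
     (\<forall>i < dim_col M. 0 \<le> \<sigma> i) \<and>
     char_poly (transpose_mat M * M) = (\<Prod>i<dim_col M. [:- ((\<sigma> i)\<^sup>2), 1:]))"

definition sin_theta :: "real mat \<Rightarrow> real mat \<Rightarrow> real mat" where
  "sin_theta Vh V = (let M = transpose_mat Vh * V; \<sigma> = singular_values M in
      mat (dim_col M) (dim_col M) (\<lambda>(i,j). if i = j then sin (arccos (\<sigma> i)) else 0))"

definition eigengap :: "(nat \<Rightarrow> real) \<Rightarrow> nat \<Rightarrow> nat \<Rightarrow> nat \<Rightarrow> ereal" where
  "eigengap lam p r s =
     min (if r = 1 then \<infinity> else ereal (lam (r - 1) - lam r))
         (if s = p then \<infinity> else ereal (lam s - lam (s + 1)))"

end

theory Submission
  imports Defs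
begin

(* Let E = Sigmah - Sigma,
   let u_1 .. u_p be an orthonormal eigenbasis of Sigma ordered like lam, and call the indices
   outside {r..s} outer.  Parseval in the basis {columns of V} + {outer u_k} shows that
   ||sin Theta||_F^2 = d - ||Vh^T V||_F^2 equals the outer mass S = sum_j sum_{k outer} (u_k . vh_j)^2.
   The outer coefficients of (Sigma - lam_j) vh_j = (lamh_j - lam_j) vh_j - E vh_j are
   (lam_k - lam_j) (u_k . vh_j) with |lam_k - lam_j| >= g, so by Bessel's inequality
   g^2 S <= 2 sum_j ||E vh_j||^2 + 2 sum_j (lamh_j - lam_j)^2 <= 4 min (d ||E||_op^2, ||E||_F^2),
   using the operator norm and Bessel for the first sum, Weyl and Hoffman-Wielandt for the second.
   For the rotation, the orthogonal polar factor O of Vh^T V has <O, Vh^T V> >= ||Vh^T V||_F^2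
   (its singular values lie in [0,1]), so ||Vh O - V||_F^2 = 2d - 2 <O, Vh^T V> <= 2 S. *)

definition orthonormal_family :: "nat \<Rightarrow> nat set \<Rightarrow> (nat \<Rightarrow> real vec) \<Rightarrow> bool" where
  "orthonormal_family n J u \<longleftrightarrow> (\<forall>i\<in>J. u i \<in> carrier_vec n) \<and>
     (\<forall>i\<in>J. \<forall>k\<in>J. u i \<bullet> u k = (if i = k then 1 else 0))"

lemma orthonormal_familyD:
  "orthonormal_family n J u \<Longrightarrow> i \<in> J \<Longrightarrow> u i \<in> carrier_vec n"
  "orthonormal_family n J u \<Longrightarrow> i \<in> J \<Longrightarrow> k \<in> J \<Longrightarrow> u i \<bullet> u k = (if i = k then 1 else 0)"
  unfolding orthonormal_family_def by auto

lemma dot_self_nonneg: "(x::real vec) \<bullet> x \<ge> 0"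
  unfolding scalar_prod_def by (auto intro: sum_nonneg)

lemma dot_self_pos: "(x::real vec) \<in> carrier_vec n \<Longrightarrow> x \<noteq> 0\<^sub>v n \<Longrightarrow> x \<bullet> x > 0"
  using conjugate_square_greater_0_vec[of x n] by simp

lemma dot_as_sum: "y \<in> carrier_vec n \<Longrightarrow> x \<bullet> y = (\<Sum>i<n. x $ i * y $ i)"
  unfolding scalar_prod_def by (auto simp: atLeast0LessThan)

lemma dot_self_as_sum: "(x::real vec) \<in> carrier_vec n \<Longrightarrow> x \<bullet> x = (\<Sum>i<n. (x $ i)\<^sup>2)"
  by (simp add: dot_as_sum power2_eq_square)

lemma normalize_unit:
  assumes "(x::real vec) \<in> carrier_vec n" "x \<noteq> 0\<^sub>v n"
  shows "((1 / sqrt (x \<bullet> x)) \<cdot>\<^sub>v x) \<bullet> ((1 / sqrt (x \<bullet> x)) \<cdot>\<^sub>v x) = 1"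
proof -
  have pos: "x \<bullet> x > 0" using dot_self_pos[OF assms] .
  have "((1 / sqrt (x \<bullet> x)) \<cdot>\<^sub>v x) \<bullet> ((1 / sqrt (x \<bullet> x)) \<cdot>\<^sub>v x)
      = (1 / sqrt (x \<bullet> x)) * ((1 / sqrt (x \<bullet> x)) * (x \<bullet> x))"
    using assms by simp
  also have "\<dots> = 1" using pos by (simp add: field_simps)
  finally show ?thesis .
qed

text \<open>Fewer than \<open>n\<close> vectors in \<open>\<real>\<^sup>n\<close> have a common nonzero orthogonal vector: the square
  matrix having them as rows (padded by a zero row) is singular.\<close>
lemma nonzero_orthogonal_vector_exists:
  assumes fin: "finite F" and F: "F \<subseteq> carrier_vec n" and card: "card F < n"
  shows "\<exists>x\<in>carrier_vec n. x \<noteq> 0\<^sub>v n \<and> (\<forall>v\<in>F. v \<bullet> x = (0::real))"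
proof -
  obtain vs where vs: "set vs = F" "distinct vs" using finite_distinct_list[OF fin] by blast
  have len: "length vs < n" using vs card distinct_card by fastforce
  define c where "c = (\<lambda>i. if i < length vs then vs ! i else 0\<^sub>v n)"
  have c: "c \<in> {0..<n} \<rightarrow> carrier_vec n" using vs F unfolding c_def by (auto, metis nth_mem subsetD)
  define A :: "real mat" where "A = mat\<^sub>r n n (\<lambda>i. if i = n - 1 then 0\<^sub>v n else c i)"
  have A: "A \<in> carrier_mat n n" unfolding A_def by auto
  have "det A = 0" unfolding A_def by (rule det_row_0[OF _ c], insert len, auto)
  then obtain x where x: "x \<in> carrier_vec n" "x \<noteq> 0\<^sub>v n" "A *\<^sub>v x = 0\<^sub>v n"
    using det_0_iff_vec_prod_zero[OF A] by blast
  have "v \<bullet> x = 0" if "v \<in> F" for v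
  proof -
    obtain i where i: "i < length vs" "v = vs ! i" using vs \<open>v \<in> F\<close> by (metis in_set_conv_nth)
    have "(A *\<^sub>v x) $ i = row A i \<bullet> x" using i len A by auto
    also have "row A i = vs ! i" using i len vs F unfolding A_def c_def
      by (subst row_mat_of_row_fun, auto, metis nth_mem subsetD carrier_vecD)
    finally show "v \<bullet> x = 0" using x(3) i len by auto
  qed
  thus ?thesis using x by blast
qed

lemma unit_orthogonal_vector_exists:
  assumes fin: "finite F" and F: "F \<subseteq> carrier_vec n" and card: "card F < n"
  shows "\<exists>x\<in>carrier_vec n. x \<bullet> x = (1::real) \<and> (\<forall>v\<in>F. v \<bullet> x = 0)"
proof -
  obtain x where x: "x \<in> carrier_vec n" "x \<noteq> 0\<^sub>v n" "\<forall>v\<in>F. v \<bullet> x = 0"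
    using nonzero_orthogonal_vector_exists[OF assms] by blast
  define y where "y = (1 / sqrt (x \<bullet> x)) \<cdot>\<^sub>v x"
  have "y \<in> carrier_vec n" using x unfolding y_def by auto
  moreover have "y \<bullet> y = 1" unfolding y_def by (rule normalize_unit[OF x(1,2)])
  moreover have "\<forall>v\<in>F. v \<bullet> y = 0" using x F unfolding y_def
    by (auto simp: scalar_prod_smult_distrib[of _ n])
  ultimately show ?thesis by blast
qed

lemma orthonormal_family_insert:
  assumes u: "orthonormal_family n J u" and i0: "i0 \<notin> J"
    and x: "x \<in> carrier_vec n" "x \<bullet> x = 1" and orth: "\<And>i. i \<in> J \<Longrightarrow> u i \<bullet> x = 0"
  shows "orthonormal_family n (insert i0 J) (u(i0 := x))"
  unfolding orthonormal_family_def
proof (intro conjI ballI)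
  fix i assume "i \<in> insert i0 J" then show "(u(i0 := x)) i \<in> carrier_vec n"
    using x orthonormal_familyD(1)[OF u] by auto
next
  fix i k assume ik: "i \<in> insert i0 J" "k \<in> insert i0 J"
  have xu: "x \<bullet> u i = 0" if "i \<in> J" for i
    using orth[OF that] comm_scalar_prod[of x n "u i"] x orthonormal_familyD(1)[OF u that] by auto
  show "(u(i0 := x)) i \<bullet> (u(i0 := x)) k = (if i = k then 1 else 0)"
    using ik i0 x(2) orth xu orthonormal_familyD(2)[OF u] by auto
qed

lemma orthonormal_family_extend:
  assumes "orthonormal_family n J u" and "J \<subseteq> {..<n}"
  shows "\<exists>w. orthonormal_family n {..<n} w \<and> (\<forall>i\<in>J. w i = u i)"
proof -
  have "card ({..<n} - J) = m \<Longrightarrow> orthonormal_family n J u \<Longrightarrow> J \<subseteq> {..<n} \<Longrightarrow>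
    \<exists>w. orthonormal_family n {..<n} w \<and> (\<forall>i\<in>J. w i = u i)" for m
  proof (induction m arbitrary: J u)
    case 0
    then have "J = {..<n}" by auto
    then show ?case using 0 by blast
  next
    case (Suc m)
    then obtain i0 where i0: "i0 \<in> {..<n} - J"
      by (metis card.empty empty_iff nat.distinct(1) subsetI subset_antisym)
    have finJ: "finite J" using Suc(4) finite_subset by blast
    have "card J < n" using psubset_card_mono[of "{..<n}" J] Suc(4) i0 by auto
    then have card: "card (u ` J) < n" using card_image_le[OF finJ, of u] by linarith
    have F: "u ` J \<subseteq> carrier_vec n" using orthonormal_familyD(1)[OF Suc(3)] by auto
    obtain x where x: "x \<in> carrier_vec n" "x \<bullet> x = 1" "\<forall>v\<in>u ` J. v \<bullet> x = 0"
      using unit_orthogonal_vector_exists[OF _ F card] finJ by blast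
    have ext: "orthonormal_family n (insert i0 J) (u(i0 := x))"
      by (rule orthonormal_family_insert[OF Suc(3)], insert i0 x, auto)
    have "card ({..<n} - insert i0 J) = m"
      using Suc(2) i0 by (metis Diff_insert card_Diff_singleton diff_Suc_1 finite_Diff finite_lessThan)
    from Suc(1)[OF this ext] Suc(4) i0 obtain w where
      w: "orthonormal_family n {..<n} w" "\<forall>i\<in>insert i0 J. w i = (u(i0 := x)) i" by auto
    then show ?case using i0 by force
  qed
  then show ?thesis using assms by blast
qed

definition basis_mat :: "nat \<Rightarrow> (nat \<Rightarrow> real vec) \<Rightarrow> real mat" where
  "basis_mat n u = mat n n (\<lambda>(i,k). u k $ i)"

lemma basis_mat_carrier[simp]: "basis_mat n u \<in> carrier_mat n n"
  unfolding basis_mat_def by auto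

lemma basis_mat_orthogonal:
  assumes u: "orthonormal_family n {..<n} u"
  shows "transpose_mat (basis_mat n u) * basis_mat n u = 1\<^sub>m n"
    and "basis_mat n u * transpose_mat (basis_mat n u) = 1\<^sub>m n"
proof -
  define U where "U = basis_mat n u"
  have U: "U \<in> carrier_mat n n" unfolding U_def by auto
  have cu: "\<And>k. k < n \<Longrightarrow> u k \<in> carrier_vec n" using u orthonormal_familyD by blast
  show UU: "transpose_mat (basis_mat n u) * basis_mat n u = 1\<^sub>m n" unfolding U_def[symmetric]
  proof (rule eq_matI)
    fix a b assume ab: "a < dim_row (1\<^sub>m n :: real mat)" "b < dim_col (1\<^sub>m n :: real mat)"
    have "(transpose_mat U * U) $$ (a,b) = (\<Sum>i<n. u a $ i * u b $ i)"
      using ab U by (simp add: scalar_prod_def U_def basis_mat_def atLeast0LessThan)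
    also have "\<dots> = u a \<bullet> u b" using dot_as_sum[OF cu[of b]] ab by simp
    also have "\<dots> = 1\<^sub>m n $$ (a,b)" using orthonormal_familyD(2)[OF u, of a b] ab by auto
    finally show "(transpose_mat U * U) $$ (a,b) = 1\<^sub>m n $$ (a,b)" .
  qed (insert U, auto)
  then show "basis_mat n u * transpose_mat (basis_mat n u) = 1\<^sub>m n"
    using mat_mult_left_right_inverse[of "transpose_mat U" n U] U unfolding U_def by auto
qed

lemma orthonormal_basis_dual:
  assumes u: "orthonormal_family n {..<n} u" and i: "i < n" and j: "j < n"
  shows "(\<Sum>k<n. u k $ i * u k $ j) = (if i = j then 1 else (0::real))"
proof -
  have "(basis_mat n u * transpose_mat (basis_mat n u)) $$ (i,j) = (\<Sum>k<n. u k $ i * u k $ j)"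
    using i j by (simp add: scalar_prod_def basis_mat_def atLeast0LessThan)
  then show ?thesis using basis_mat_orthogonal(2)[OF u] i j by auto
qed

lemma orthonormal_basis_expand:
  assumes u: "orthonormal_family n {..<n} u" and x: "x \<in> carrier_vec n" and i: "i < n"
  shows "x $ i = (\<Sum>k<n. (u k \<bullet> x) * u k $ i)"
proof -
  have "(\<Sum>k<n. (u k \<bullet> x) * u k $ i) = (\<Sum>k<n. (\<Sum>j<n. u k $ j * x $ j) * u k $ i)"
    using dot_as_sum[OF x] by simp
  also have "\<dots> = (\<Sum>j<n. x $ j * (\<Sum>k<n. u k $ j * u k $ i))"
    unfolding sum_distrib_left sum_distrib_right by (subst sum.swap) (simp add: ac_simps)
  also have "\<dots> = (\<Sum>j<n. x $ j * (if j = i then 1 else 0))"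
    by (rule sum.cong, simp, subst orthonormal_basis_dual[OF u], auto simp: i)
  also have "\<dots> = x $ i" using i by (simp add: if_distrib cong: if_cong)
  finally show ?thesis by simp
qed

lemma parseval:
  assumes u: "orthonormal_family n {..<n} u" and x: "x \<in> carrier_vec n" and y: "y \<in> carrier_vec n"
  shows "x \<bullet> y = (\<Sum>k<n. (u k \<bullet> x) * (u k \<bullet> y))"
proof -
  have "x \<bullet> y = (\<Sum>i<n. (\<Sum>k<n. (u k \<bullet> x) * u k $ i) * y $ i)"
    using dot_as_sum[OF y] orthonormal_basis_expand[OF u x] by simp
  also have "\<dots> = (\<Sum>k<n. (u k \<bullet> x) * (\<Sum>i<n. u k $ i * y $ i))"
    unfolding sum_distrib_left sum_distrib_right by (subst sum.swap) (simp add: ac_simps)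
  also have "\<dots> = (\<Sum>k<n. (u k \<bullet> x) * (u k \<bullet> y))"
    using dot_as_sum[OF y] by simp
  finally show ?thesis .
qed

lemma parseval_norm:
  assumes u: "orthonormal_family n {..<n} u" and x: "x \<in> carrier_vec n"
  shows "x \<bullet> x = (\<Sum>k<n. (u k \<bullet> x)\<^sup>2)"
  using parseval[OF u x x] by (simp add: power2_eq_square)

lemma orthonormal_basis_eqI:
  assumes u: "orthonormal_family n {..<n} u" and x: "x \<in> carrier_vec n" and y: "y \<in> carrier_vec n"
    and eq: "\<And>k. k < n \<Longrightarrow> u k \<bullet> x = u k \<bullet> y"
  shows "x = y"
proof (rule eq_vecI)
  fix i assume "i < dim_vec y"
  then have i: "i < n" using y by auto
  show "x $ i = y $ i"
    using orthonormal_basis_expand[OF u x i] orthonormal_basis_expand[OF u y i] eq by simp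
qed (insert x y, auto)

text \<open>Bessel's inequality, obtained by extending the family to a basis.\<close>
lemma bessel:
  assumes u: "orthonormal_family n J u" and J: "J \<subseteq> {..<n}" and x: "x \<in> carrier_vec n"
  shows "(\<Sum>k\<in>J. (u k \<bullet> x)\<^sup>2) \<le> x \<bullet> x"
proof -
  obtain w where w: "orthonormal_family n {..<n} w" "\<forall>i\<in>J. w i = u i"
    using orthonormal_family_extend[OF u J] by blast
  have "(\<Sum>k\<in>J. (u k \<bullet> x)\<^sup>2) = (\<Sum>k\<in>J. (w k \<bullet> x)\<^sup>2)" using w by simp
  also have "\<dots> \<le> (\<Sum>k<n. (w k \<bullet> x)\<^sup>2)" by (rule sum_mono2, insert J, auto)
  also have "\<dots> = x \<bullet> x" using parseval_norm[OF w(1) x] by simp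
  finally show ?thesis .
qed

text \<open>Cauchy-Schwarz, as Bessel's inequality for the normalised vector \<open>x\<close>.\<close>
lemma cauchy_schwarz:
  assumes x: "(x::real vec) \<in> carrier_vec n" and y: "y \<in> carrier_vec n"
  shows "(x \<bullet> y)\<^sup>2 \<le> (x \<bullet> x) * (y \<bullet> y)"
proof (cases "x = 0\<^sub>v n")
  case True then show ?thesis using x y by (simp add: dot_self_nonneg)
next
  case False
  define c where "c = 1 / sqrt (x \<bullet> x)"
  have pos: "x \<bullet> x > 0" using dot_self_pos[OF x False] .
  have unit: "orthonormal_family n {0} (\<lambda>_. c \<cdot>\<^sub>v x)" unfolding orthonormal_family_def c_def
    using normalize_unit[OF x False] x by auto
  have "0 < n"
  proof (rule ccontr)
    assume "\<not> 0 < n"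
    then have "x = 0\<^sub>v n" using x by (intro eq_vecI, auto)
    then show False using False by simp
  qed
  then have "(c * (x \<bullet> y))\<^sup>2 \<le> y \<bullet> y" using bessel[OF unit _ y] x y by auto
  then have "(x \<bullet> y)\<^sup>2 / (x \<bullet> x) \<le> y \<bullet> y" using pos
    by (simp add: c_def power_mult_distrib power_divide real_sqrt_pow2 divide_simps)
  then show ?thesis using pos by (simp add: field_simps mult.commute)
qed

lemma dot_diff_self:
  assumes x: "(x::real vec) \<in> carrier_vec n" and v: "v \<in> carrier_vec n"
  shows "(x - v) \<bullet> (x - v) = x \<bullet> x - 2 * (x \<bullet> v) + v \<bullet> v"
  using x v comm_scalar_prod[OF v x] minus_scalar_prod_distrib[OF x v, of "x - v"]
    scalar_prod_minus_distrib[OF x x v] scalar_prod_minus_distrib[OF v x v] by auto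

lemma dot_diff_le:
  assumes a: "(a::real vec) \<in> carrier_vec n" and b: "b \<in> carrier_vec n"
  shows "(a - b) \<bullet> (a - b) \<le> 2 * (a \<bullet> a) + 2 * (b \<bullet> b)"
proof -
  have "(a - b) \<bullet> (a - b) = (\<Sum>i<n. (a $ i - b $ i)\<^sup>2)" using a b by (subst dot_self_as_sum[of _ n]) auto
  also have "\<dots> \<le> (\<Sum>i<n. 2 * (a $ i)\<^sup>2 + 2 * (b $ i)\<^sup>2)"
  proof (intro sum_mono)
    fix i
    have "0 \<le> (a $ i + b $ i)\<^sup>2" by simp
    then show "(a $ i - b $ i)\<^sup>2 \<le> 2 * (a $ i)\<^sup>2 + 2 * (b $ i)\<^sup>2" by (simp add: power2_diff power2_sum)
  qed
  also have "\<dots> = 2 * (a \<bullet> a) + 2 * (b \<bullet> b)"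
    using dot_self_as_sum[OF a] dot_self_as_sum[OF b] by (simp add: sum.distrib sum_distrib_left)
  finally show ?thesis .
qed

lemma symmetric_dot:
  assumes A: "A \<in> carrier_mat n n" and s: "transpose_mat A = A"
    and x: "x \<in> carrier_vec n" and y: "y \<in> carrier_vec n"
  shows "(A *\<^sub>v x) \<bullet> y = x \<bullet> ((A::real mat) *\<^sub>v y)"
  using transpose_vec_mult_scalar[OF A y x] s by simp

lemma dot_lincomb:
  assumes a: "a \<in> carrier_vec n" and f: "\<And>t. t \<in> T \<Longrightarrow> f t \<in> carrier_vec n" and T: "finite T"
  shows "a \<bullet> vec n (\<lambda>i. \<Sum>t\<in>T. c t * f t $ i) = (\<Sum>t\<in>T. c t * (a \<bullet> f t :: real))"
proof -
  have "a \<bullet> vec n (\<lambda>i. \<Sum>t\<in>T. c t * f t $ i) = (\<Sum>i<n. a $ i * (\<Sum>t\<in>T. c t * f t $ i))"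
    by (subst dot_as_sum[of _ n], auto)
  also have "\<dots> = (\<Sum>t\<in>T. c t * (\<Sum>i<n. a $ i * f t $ i))"
    unfolding sum_distrib_left by (subst sum.swap) (simp add: ac_simps)
  also have "\<dots> = (\<Sum>t\<in>T. c t * (a \<bullet> f t))"
    by (rule sum.cong, simp, subst dot_as_sum[OF f], auto)
  finally show ?thesis .
qed

text \<open>A complex eigenvalue of a real symmetric matrix is real: with \<open>h = z\<^sup>* A z\<close> and
  \<open>N = z\<^sup>* z > 0\<close> we have \<open>h = e N\<close> and \<open>cnj h = h\<close> by symmetry.\<close>
lemma symmetric_eigenvalue_real:
  assumes A: "(A::real mat) \<in> carrier_mat n n" and s: "transpose_mat A = A"
    and z: "z \<in> carrier_vec n" "z \<noteq> 0\<^sub>v n" and ev: "map_mat complex_of_real A *\<^sub>v z = e \<cdot>\<^sub>v z"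
  shows "cnj e = e"
proof -
  have Asym: "\<And>i j. i < n \<Longrightarrow> j < n \<Longrightarrow> A $$ (i,j) = A $$ (j,i)"
    using s A by (metis carrier_matD(1) carrier_matD(2) index_transpose_mat(1))
  have Az: "\<And>i. i < n \<Longrightarrow> (map_mat complex_of_real A *\<^sub>v z) $ i = (\<Sum>j<n. complex_of_real (A $$ (i,j)) * z $ j)"
    using z(1) A by (auto simp: scalar_prod_def atLeast0LessThan)
  define h where "h = (\<Sum>i<n. \<Sum>j<n. cnj (z $ i) * complex_of_real (A $$ (i,j)) * z $ j)"
  define N where "N = (\<Sum>i<n. cnj (z $ i) * z $ i)"
  have hN: "h = e * N"
  proof -
    have "h = (\<Sum>i<n. cnj (z $ i) * (map_mat complex_of_real A *\<^sub>v z) $ i)"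
      unfolding h_def by (rule sum.cong, simp, subst Az, auto simp: sum_distrib_left ac_simps)
    also have "\<dots> = (\<Sum>i<n. cnj (z $ i) * (e * z $ i))"
      using z ev by (intro sum.cong, auto)
    finally show ?thesis unfolding N_def by (simp add: sum_distrib_left ac_simps)
  qed
  have "cnj h = (\<Sum>i<n. \<Sum>j<n. z $ i * complex_of_real (A $$ (i,j)) * cnj (z $ j))"
    unfolding h_def by (simp add: cnj_sum)
  also have "\<dots> = (\<Sum>j<n. \<Sum>i<n. z $ i * complex_of_real (A $$ (i,j)) * cnj (z $ j))"
    by (rule sum.swap)
  also have "\<dots> = h" unfolding h_def
    by (intro sum.cong refl, subst Asym, auto simp: ac_simps)
  finally have hc: "cnj h = h" .
  have Nr: "N = complex_of_real (\<Sum>i<n. (cmod (z $ i))\<^sup>2)"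
    unfolding N_def of_real_sum by (intro sum.cong refl) (metis complex_norm_square mult.commute)
  obtain i0 where i0: "i0 < n" "z $ i0 \<noteq> 0"
    using z by (metis carrier_vecD eq_vecI index_zero_vec(1) index_zero_vec(2))
  have "(\<Sum>i<n. (cmod (z $ i))\<^sup>2) \<ge> (cmod (z $ i0))\<^sup>2"
    by (rule member_le_sum, insert i0, auto)
  moreover have "(cmod (z $ i0))\<^sup>2 > 0" using i0 by simp
  ultimately have "N \<noteq> 0" unfolding Nr by (metis less_le_trans of_real_eq_0_iff order_less_irrefl)
  moreover have "cnj e * N = e * N" using hc hN Nr by simp
  ultimately show ?thesis by simp
qed

text \<open>Every real symmetric matrix of positive size has a real eigenvector: the characteristic
  polynomial has a complex root, which is real by the previous lemma.\<close>
lemma symmetric_eigenvector_exists: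
  assumes A: "(A::real mat) \<in> carrier_mat n n" and s: "transpose_mat A = A" and n: "0 < n"
  shows "\<exists>\<mu> x. x \<in> carrier_vec n \<and> x \<noteq> 0\<^sub>v n \<and> A *\<^sub>v x = \<mu> \<cdot>\<^sub>v x"
proof -
  define Ac where "Ac = map_mat complex_of_real A"
  have Ac: "Ac \<in> carrier_mat n n" using A unfolding Ac_def by auto
  obtain es where es: "char_poly Ac = (\<Prod>a\<leftarrow>es. [:- a, 1:])" "length es = n"
    using char_poly_factorized[OF Ac] by blast
  then obtain e where e: "e \<in> set es" using n by (cases es, auto)
  have root: "poly (char_poly Ac) e = 0" unfolding es(1) by (rule linear_poly_root[OF e])
  then have "eigenvalue Ac e" using eigenvalue_root_char_poly[OF Ac] by simp
  then obtain z where z: "z \<in> carrier_vec n" "z \<noteq> 0\<^sub>v n" "Ac *\<^sub>v z = e \<cdot>\<^sub>v z"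
    unfolding eigenvalue_def eigenvector_def using Ac by auto
  have "cnj e = e" by (rule symmetric_eigenvalue_real[OF A s z(1,2) z(3)[unfolded Ac_def]])
  then have "Im e = 0" using arg_cong[of "cnj e" e Im] by (metis cnj.sel(2) neg_equal_zero)
  then have e_real: "e = complex_of_real (Re e)" by (simp add: complex_eq_iff)
  have "char_poly Ac = map_poly of_real (char_poly A)"
    unfolding Ac_def using of_real_hom.char_poly_hom[OF A] by simp
  then have "complex_of_real (poly (char_poly A) (Re e)) = 0"
    using root e_real of_real_hom.poly_map_poly by metis
  then have "eigenvalue A (Re e)" using eigenvalue_root_char_poly[OF A] by simp
  then show ?thesis unfolding eigenvalue_def eigenvector_def using A by auto
qed

lemma compression_symmetric:
  assumes A: "(A::real mat) \<in> carrier_mat n n" and s: "transpose_mat A = A"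
    and f: "\<And>t. t < m \<Longrightarrow> f t \<in> carrier_vec n"
  shows "transpose_mat (mat m m (\<lambda>(s,t). f s \<bullet> (A *\<^sub>v f t))) = mat m m (\<lambda>(s,t). f s \<bullet> (A *\<^sub>v f t))"
proof (rule eq_matI)
  fix a b assume ab: "a < dim_row (mat m m (\<lambda>(s,t). f s \<bullet> (A *\<^sub>v f t)))"
    "b < dim_col (mat m m (\<lambda>(s,t). f s \<bullet> (A *\<^sub>v f t)))"
  then have "a < m" "b < m" by auto
  have "f b \<bullet> (A *\<^sub>v f a) = (A *\<^sub>v f b) \<bullet> f a" using symmetric_dot[OF A s f f] \<open>a < m\<close> \<open>b < m\<close> by simp
  also have "\<dots> = f a \<bullet> (A *\<^sub>v f b)"
    by (rule comm_scalar_prod[of _ n], insert A f \<open>a < m\<close> \<open>b < m\<close>, auto)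
  finally show "transpose_mat (mat m m (\<lambda>(s,t). f s \<bullet> (A *\<^sub>v f t))) $$ (a,b)
      = mat m m (\<lambda>(s,t). f s \<bullet> (A *\<^sub>v f t)) $$ (a,b)" using \<open>a < m\<close> \<open>b < m\<close> by simp
qed auto

lemma lift_coefficients:
  assumes w: "orthonormal_family n {..<n} w" and m: "k + m = n" and j: "j < n"
  shows "w j \<bullet> vec n (\<lambda>i. \<Sum>t<m. y $ t * w (k+t) $ i) = (if k \<le> j then y $ (j - k) else 0)"
proof -
  have wc: "\<And>i. i < n \<Longrightarrow> w i \<in> carrier_vec n" using w orthonormal_familyD by blast
  have "w j \<bullet> vec n (\<lambda>i. \<Sum>t<m. y $ t * w (k+t) $ i) = (\<Sum>t<m. y $ t * (w j \<bullet> w (k+t)))"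
    by (rule dot_lincomb[OF wc[OF j]], insert wc m, auto)
  also have "\<dots> = (\<Sum>t<m. (if t = j - k \<and> k \<le> j then y $ t else 0))"
    by (rule sum.cong, simp, subst orthonormal_familyD(2)[OF w], insert j m, auto)
  also have "\<dots> = (if k \<le> j then y $ (j - k) else 0)" using j m by auto
  finally show ?thesis .
qed

lemma compression_eigenvector_lift:
  assumes A: "(A::real mat) \<in> carrier_mat n n" and s: "transpose_mat A = A"
    and w: "orthonormal_family n {..<n} w" and km: "k + m = n"
    and eig: "\<And>j. j < k \<Longrightarrow> A *\<^sub>v w j = \<mu> j \<cdot>\<^sub>v w j"
    and y: "y \<in> carrier_vec m" and Cy: "mat m m (\<lambda>(s,t). w (k+s) \<bullet> (A *\<^sub>v w (k+t))) *\<^sub>v y = \<nu> \<cdot>\<^sub>v y"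
  defines "z \<equiv> vec n (\<lambda>i. \<Sum>t<m. y $ t * w (k+t) $ i)"
  shows "A *\<^sub>v z = \<nu> \<cdot>\<^sub>v z"
proof (rule orthonormal_basis_eqI[OF w])
  have wc: "\<And>i. i < n \<Longrightarrow> w i \<in> carrier_vec n" using w orthonormal_familyD by blast
  have wkt: "\<And>t. t < m \<Longrightarrow> w (k+t) \<in> carrier_vec n" using wc km by auto
  have z: "z \<in> carrier_vec n" unfolding z_def by auto
  then show "A *\<^sub>v z \<in> carrier_vec n" "\<nu> \<cdot>\<^sub>v z \<in> carrier_vec n" using A by auto
  fix j assume j: "j < n"
  have wz: "w j \<bullet> z = (if k \<le> j then y $ (j - k) else 0)"
    unfolding z_def by (rule lift_coefficients[OF w km j])
  have "w j \<bullet> (A *\<^sub>v z) = (A *\<^sub>v w j) \<bullet> z" using symmetric_dot[OF A s wc[OF j] z] by simp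
  also have "\<dots> = (\<Sum>t<m. y $ t * ((A *\<^sub>v w j) \<bullet> w (k+t)))"
    unfolding z_def by (rule dot_lincomb[OF _ wkt], insert A wc[OF j], auto)
  also have "\<dots> = w j \<bullet> (\<nu> \<cdot>\<^sub>v z)"
  proof (cases "j < k")
    case True
    have "(A *\<^sub>v w j) \<bullet> w (k+t) = \<mu> j * (w j \<bullet> w (k+t))" if "t < m" for t
      using eig[OF True] wc[OF j] wkt[OF that] by simp
    then have "(\<Sum>t<m. y $ t * ((A *\<^sub>v w j) \<bullet> w (k+t))) = 0"
      using orthonormal_familyD(2)[OF w] True km by (intro sum.neutral) auto
    then show ?thesis using wz True z wc[OF j] by simp
  next
    case False
    define a where "a = j - k"
    have a: "a < m" "j = k + a" using False j km unfolding a_def by auto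
    have "(A *\<^sub>v w j) \<bullet> w (k+t) = mat m m (\<lambda>(s,t). w (k+s) \<bullet> (A *\<^sub>v w (k+t))) $$ (a,t)" if "t < m" for t
      using symmetric_dot[OF A s wc[OF j] wkt[OF that]] that a by simp
    then have "(\<Sum>t<m. y $ t * ((A *\<^sub>v w j) \<bullet> w (k+t)))
        = (mat m m (\<lambda>(s,t). w (k+s) \<bullet> (A *\<^sub>v w (k+t))) *\<^sub>v y) $ a"
      using a y by (simp add: dot_as_sum[of _ m] mult.commute)
    also have "\<dots> = \<nu> * y $ a" using Cy a y by simp
    also have "\<dots> = w j \<bullet> (\<nu> \<cdot>\<^sub>v z)" using wz False z wc[OF j] a by simp
    finally show ?thesis .
  qed
  finally show "w j \<bullet> (A *\<^sub>v z) = w j \<bullet> (\<nu> \<cdot>\<^sub>v z)" .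
qed

text \<open>Inductive step of the spectral theorem: orthonormal eigenvectors \<open>u 0, \<dots>, u (k-1)\<close> with
  \<open>k < n\<close> can be extended by a further unit eigenvector.  Complete them to a basis, take an
  eigenvector of the compression to the complement (symmetric, so it has one) and lift it.\<close>
lemma spectral_step:
  assumes A: "(A::real mat) \<in> carrier_mat n n" and s: "transpose_mat A = A"
    and k: "k < n" and u: "orthonormal_family n {..<k} u"
    and eig: "\<And>i. i < k \<Longrightarrow> A *\<^sub>v u i = \<mu> i \<cdot>\<^sub>v u i"
  shows "\<exists>z \<nu>. z \<in> carrier_vec n \<and> z \<bullet> z = 1 \<and> (\<forall>i<k. u i \<bullet> z = 0) \<and> A *\<^sub>v z = \<nu> \<cdot>\<^sub>v z"
proof -
  obtain w where w: "orthonormal_family n {..<n} w" "\<forall>i\<in>{..<k}. w i = u i"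
    using orthonormal_family_extend[OF u] k by auto
  have wc: "\<And>i. i < n \<Longrightarrow> w i \<in> carrier_vec n" using w(1) orthonormal_familyD by blast
  define m where "m = n - k"
  have km: "k + m = n" and m: "0 < m" using k unfolding m_def by auto
  have wkt: "\<And>t. t < m \<Longrightarrow> w (k+t) \<in> carrier_vec n" using wc km by auto
  define C :: "real mat" where "C = mat m m (\<lambda>(s,t). w (k+s) \<bullet> (A *\<^sub>v w (k+t)))"
  have C: "C \<in> carrier_mat m m" unfolding C_def by auto
  have "transpose_mat C = C" unfolding C_def by (rule compression_symmetric[OF A s wkt])
  then obtain \<nu> y where y: "y \<in> carrier_vec m" "y \<noteq> 0\<^sub>v m" "C *\<^sub>v y = \<nu> \<cdot>\<^sub>v y"
    using symmetric_eigenvector_exists[OF C _ m] by blast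
  define z where "z = vec n (\<lambda>i. \<Sum>t<m. y $ t * w (k+t) $ i)"
  have z: "z \<in> carrier_vec n" unfolding z_def by auto
  have wz: "\<And>j. j < n \<Longrightarrow> w j \<bullet> z = (if k \<le> j then y $ (j - k) else 0)"
    unfolding z_def by (rule lift_coefficients[OF w(1) km])
  have Az: "A *\<^sub>v z = \<nu> \<cdot>\<^sub>v z"
    unfolding z_def by (rule compression_eigenvector_lift[OF A s w(1) km _ y(1) y(3)[unfolded C_def]],
      insert w(2) eig, auto)
  have z0: "z \<noteq> 0\<^sub>v n"
  proof
    assume "z = 0\<^sub>v n"
    moreover obtain a where a: "a < m" "y $ a \<noteq> 0" using y(1,2)
      by (metis carrier_vecD eq_vecI index_zero_vec(1) index_zero_vec(2))
    ultimately show False using wz[of "k+a"] wc[of "k+a"] km by auto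
  qed
  define z' where "z' = (1 / sqrt (z \<bullet> z)) \<cdot>\<^sub>v z"
  have "z' \<in> carrier_vec n" using z unfolding z'_def by auto
  moreover have "z' \<bullet> z' = 1" unfolding z'_def by (rule normalize_unit[OF z z0])
  moreover have "u i \<bullet> z' = 0" if i: "i < k" for i
  proof -
    have "u i \<bullet> z = 0" "u i \<in> carrier_vec n" using wz[of i] w(2) k wc[of i] i by auto
    then show "u i \<bullet> z' = 0" unfolding z'_def using scalar_prod_smult_distrib[of "u i" n z] z by auto
  qed
  moreover have "A *\<^sub>v z' = \<nu> \<cdot>\<^sub>v z'" unfolding z'_def
    using Az A z by (simp add: mult_mat_vec[of _ n n] smult_smult_assoc mult.commute)
  ultimately show ?thesis by blast
qed

lemma spectral_theorem:
  assumes A: "(A::real mat) \<in> carrier_mat n n" and s: "transpose_mat A = A"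
  shows "\<exists>u \<mu>. orthonormal_family n {..<n} u \<and> (\<forall>i<n. A *\<^sub>v u i = \<mu> i \<cdot>\<^sub>v u i)"
proof -
  have "k \<le> n \<Longrightarrow> \<exists>u \<mu>. orthonormal_family n {..<k} u \<and> (\<forall>i<k. A *\<^sub>v u i = \<mu> i \<cdot>\<^sub>v u i)" for k
  proof (induction k)
    case 0 then show ?case by (auto simp: orthonormal_family_def)
  next
    case (Suc k)
    then obtain u \<mu> where u: "orthonormal_family n {..<k} u" "\<forall>i<k. A *\<^sub>v u i = \<mu> i \<cdot>\<^sub>v u i" by auto
    obtain z \<nu> where z: "z \<in> carrier_vec n" "z \<bullet> z = 1" "\<forall>i<k. u i \<bullet> z = 0" "A *\<^sub>v z = \<nu> \<cdot>\<^sub>v z"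
      using spectral_step[OF A s _ u(1)] u(2) Suc(2) by (metis Suc_le_lessD)
    have "orthonormal_family n (insert k {..<k}) (u(k := z))"
      by (rule orthonormal_family_insert[OF u(1)], insert z, auto)
    moreover have "\<forall>i<Suc k. A *\<^sub>v (u(k := z)) i = (\<mu>(k := \<nu>)) i \<cdot>\<^sub>v (u(k := z)) i"
      using u(2) z(4) by (auto simp: less_Suc_eq)
    ultimately show ?case by (metis lessThan_Suc)
  qed
  then show ?thesis by blast
qed

text \<open>A matrix with an orthonormal eigenbasis is orthogonally similar to the diagonal matrix of
  its eigenvalues, which therefore are the roots of its characteristic polynomial.\<close>
lemma char_poly_eigenbasis:
  assumes u: "orthonormal_family n {..<n} u" and A: "(A::real mat) \<in> carrier_mat n n"
    and eig: "\<And>i. i < n \<Longrightarrow> A *\<^sub>v u i = \<mu> i \<cdot>\<^sub>v u i"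
  shows "char_poly A = prod_list (map (\<lambda>x. [:-x, 1:]) (map \<mu> [0..<n]))"
proof -
  define U where "U = basis_mat n u"
  have U: "U \<in> carrier_mat n n" unfolding U_def by auto
  have cu: "\<And>k. k < n \<Longrightarrow> u k \<in> carrier_vec n" using u orthonormal_familyD by blast
  define D :: "real mat" where "D = mat n n (\<lambda>(i,j). if i = j then \<mu> i else 0)"
  have D: "D \<in> carrier_mat n n" unfolding D_def by auto
  have colU: "col U k = u k" if k: "k < n" for k
    by (rule eq_vecI, insert k cu[OF k], auto simp: U_def basis_mat_def)
  have AU: "A * U = U * D"
  proof (rule eq_matI)
    fix i k assume ik: "i < dim_row (U * D)" "k < dim_col (U * D)"
    then have ik': "i < n" "k < n" using U D by auto
    have "(A * U) $$ (i,k) = (A *\<^sub>v col U k) $ i" using ik' A U by auto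
    also have "\<dots> = \<mu> k * u k $ i" using eig[OF ik'(2)] colU[OF ik'(2)] ik' cu[OF ik'(2)] by simp
    also have "\<dots> = (\<Sum>j<n. U $$ (i,j) * D $$ (j,k))"
      using ik' by (simp add: D_def U_def basis_mat_def if_distrib cong: if_cong)
    also have "\<dots> = (U * D) $$ (i,k)" using ik' U D by (simp add: scalar_prod_def atLeast0LessThan)
    finally show "(A * U) $$ (i,k) = (U * D) $$ (i,k)" .
  qed (insert A U D, auto)
  have "A = A * (U * transpose_mat U)" using basis_mat_orthogonal(2)[OF u] A unfolding U_def by simp
  also have "\<dots> = (A * U) * transpose_mat U" using A U by (simp add: assoc_mult_mat[of _ n n _ n _ n])
  also have "\<dots> = U * D * transpose_mat U" unfolding AU ..
  finally have "similar_mat A D"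
    by (intro similar_matI[of _ _ U "transpose_mat U" n],
        insert A U D basis_mat_orthogonal[OF u], auto simp: U_def)
  then have "char_poly A = char_poly D" by (rule char_poly_similar)
  also have "\<dots> = (\<Prod> a \<leftarrow> diag_mat D. [:- a, 1:])"
    by (rule char_poly_upper_triangular[OF D], auto simp: upper_triangular_def D_def)
  also have "diag_mat D = map \<mu> [0..<n]" unfolding diag_mat_def D_def by (auto intro: nth_equalityI)
  finally show ?thesis by (simp add: comp_def)
qed

lemma linear_factors_mset_eq:
  assumes "prod_list (map (\<lambda>x. [:-x, 1:]) xs) = prod_list (map (\<lambda>x. [:-x, 1::'a::idom:]) ys)"
  shows "mset xs = mset ys"
proof (rule multiset_eqI)
  fix a
  have "order a (prod_list (map (\<lambda>x. [:-x, 1::'a:]) zs)) = count (mset zs) a" for zs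
  proof -
    have "order a (prod_list (map (\<lambda>x. [:-x, 1::'a:]) zs))
        = sum_list (map (order a) (map (\<lambda>x. [:-x, 1::'a:]) zs))"
      by (rule order_prod_list, auto)
    also have "\<dots> = count (mset zs) a" by (induction zs, auto simp: order_linear')
    finally show ?thesis .
  qed
  from this[of xs] this[of ys] assms show "count (mset xs) a = count (mset ys) a" by simp
qed

text \<open>If the characteristic polynomial is \<open>\<Prod>\<^sub>i\<^sub>=\<^sub>1\<^sup>p (x - lam i)\<close>, a symmetric matrix has an
  orthonormal eigenbasis whose \<open>k\<close>-th vector belongs to \<open>lam (k + 1)\<close>: permute the basis of the
  spectral theorem.\<close>
lemma ordered_eigenbasis:
  assumes A: "(A::real mat) \<in> carrier_mat p p" and s: "transpose_mat A = A"
    and cp: "char_poly A = (\<Prod>i\<in>{1..p}. [:- lam i, 1:])"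
  shows "\<exists>u. orthonormal_family p {..<p} u \<and> (\<forall>k<p. A *\<^sub>v u k = lam (Suc k) \<cdot>\<^sub>v u k)"
proof -
  obtain u \<mu> where u: "orthonormal_family p {..<p} u" "\<forall>i<p. A *\<^sub>v u i = \<mu> i \<cdot>\<^sub>v u i"
    using spectral_theorem[OF A s] by blast
  have "(\<Prod>i\<in>{1..p}. [:- lam i, 1:]) = (\<Prod>i\<in>set [1..<Suc p]. [:- lam i, 1:])"
    by (simp only: set_upt atLeastLessThanSuc_atLeastAtMost)
  also have "\<dots> = prod_list (map (\<lambda>x. [:-x, 1:]) (map lam [1..<Suc p]))"
    by (subst prod.distinct_set_conv_list, simp_all add: map_map comp_def)
  finally have "mset (map lam [1..<Suc p]) = mset (map \<mu> [0..<p])"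
    using char_poly_eigenbasis[OF u(1) A] u(2) cp linear_factors_mset_eq by metis
  then obtain \<pi> where \<pi>: "\<pi> permutes {..<length (map \<mu> [0..<p])}"
    "permute_list \<pi> (map \<mu> [0..<p]) = map lam [1..<Suc p]"
    by (rule mset_eq_permutation)
  have \<pi>': "\<pi> permutes {..<p}" using \<pi>(1) by simp
  have \<pi>_lt: "\<And>k. k < p \<Longrightarrow> \<pi> k < p" using permutes_in_image[OF \<pi>'] by auto
  have lam_\<pi>: "lam (Suc k) = \<mu> (\<pi> k)" if k: "k < p" for k
  proof -
    have "lam (Suc k) = map lam [1..<Suc p] ! k" using k by (simp del: upt_Suc)
    also have "\<dots> = map \<mu> [0..<p] ! \<pi> k" unfolding \<pi>(2)[symmetric]
      by (rule permute_list_nth, insert \<pi> k, auto)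
    also have "\<dots> = \<mu> (\<pi> k)" using \<pi>_lt k by auto
    finally show ?thesis .
  qed
  have "\<pi> i = \<pi> k \<longleftrightarrow> i = k" for i k using permutes_inj[OF \<pi>'] by (auto simp: inj_def)
  then have "orthonormal_family p {..<p} (\<lambda>k. u (\<pi> k))"
    using u(1) \<pi>_lt unfolding orthonormal_family_def by auto
  moreover have "\<forall>k<p. A *\<^sub>v u (\<pi> k) = lam (Suc k) \<cdot>\<^sub>v u (\<pi> k)"
    using u(2) \<pi>_lt lam_\<pi> by auto
  ultimately show ?thesis by blast
qed

definition fro_sq :: "real mat \<Rightarrow> real" where
  "fro_sq M = (\<Sum>i<dim_row M. \<Sum>j<dim_col M. (M $$ (i,j))\<^sup>2)"

lemma fro_norm_fro_sq: "fro_norm M = sqrt (fro_sq M)"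
  unfolding fro_norm_def fro_sq_def ..

lemma fro_sq_nonneg: "fro_sq M \<ge> 0"
  unfolding fro_sq_def by (auto intro!: sum_nonneg)

lemma vnorm_sq: "(vnorm x)\<^sup>2 = x \<bullet> x"
  unfolding vnorm_def by (rule real_sqrt_pow2[OF dot_self_nonneg])

lemma vnorm_nonneg: "vnorm x \<ge> 0"
  unfolding vnorm_def by (simp add: dot_self_nonneg)

lemma mult_mat_vec_in_carrier[simp]: "A \<in> carrier_mat m p \<Longrightarrow> A *\<^sub>v x \<in> carrier_vec m"
  by (intro carrier_vecI, auto)

lemma fro_sq_rows:
  assumes M: "(M::real mat) \<in> carrier_mat m p"
  shows "fro_sq M = (\<Sum>a<m. row M a \<bullet> row M a)"
proof -
  have d: "dim_row M = m" "dim_col M = p" using M by auto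
  show ?thesis unfolding fro_sq_def d by (intro sum.cong refl, subst dot_self_as_sum[of _ p], insert d, auto)
qed

lemma fro_sq_cols:
  assumes X: "(X::real mat) \<in> carrier_mat p d"
  shows "fro_sq X = (\<Sum>b<d. col X b \<bullet> col X b)"
proof -
  have "fro_sq X = (\<Sum>b<d. \<Sum>i<p. (X $$ (i,b))\<^sup>2)"
    unfolding fro_sq_def using X by (subst sum.swap) auto
  also have "\<dots> = (\<Sum>b<d. col X b \<bullet> col X b)"
    by (intro sum.cong refl, subst dot_self_as_sum[of _ p], insert X, auto)
  finally show ?thesis .
qed

lemma image_mass_by_rows:
  assumes M: "(M::real mat) \<in> carrier_mat m p" and u: "\<And>k. k \<in> J \<Longrightarrow> u k \<in> carrier_vec p"
  shows "(\<Sum>k\<in>J. (M *\<^sub>v u k) \<bullet> (M *\<^sub>v u k)) = (\<Sum>a<m. \<Sum>k\<in>J. (u k \<bullet> row M a)\<^sup>2)"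
proof -
  have "(M *\<^sub>v u k) \<bullet> (M *\<^sub>v u k) = (\<Sum>a<m. (u k \<bullet> row M a)\<^sup>2)" if "k \<in> J" for k
    using M u[OF that] by (subst dot_self_as_sum[of _ m], auto intro!: sum.cong simp: comm_scalar_prod[of _ p])
  then have "(\<Sum>k\<in>J. (M *\<^sub>v u k) \<bullet> (M *\<^sub>v u k)) = (\<Sum>k\<in>J. \<Sum>a<m. (u k \<bullet> row M a)\<^sup>2)" by simp
  also have "\<dots> = (\<Sum>a<m. \<Sum>k\<in>J. (u k \<bullet> row M a)\<^sup>2)" by (rule sum.swap)
  finally show ?thesis .
qed

lemma fro_sq_orthonormal_basis:
  assumes M: "(M::real mat) \<in> carrier_mat m p" and u: "orthonormal_family p {..<p} u"
  shows "fro_sq M = (\<Sum>k<p. (M *\<^sub>v u k) \<bullet> (M *\<^sub>v u k))"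
proof -
  have "(\<Sum>k<p. (M *\<^sub>v u k) \<bullet> (M *\<^sub>v u k)) = (\<Sum>a<m. \<Sum>k<p. (u k \<bullet> row M a)\<^sup>2)"
    by (rule image_mass_by_rows[OF M], insert orthonormal_familyD(1)[OF u], auto)
  also have "\<dots> = (\<Sum>a<m. row M a \<bullet> row M a)"
    by (intro sum.cong refl, subst parseval_norm[OF u], insert M, auto)
  finally show ?thesis using fro_sq_rows[OF M] by simp
qed

lemma fro_sq_bessel:
  assumes M: "(M::real mat) \<in> carrier_mat m p" and u: "orthonormal_family p J u" and J: "J \<subseteq> {..<p}"
  shows "(\<Sum>k\<in>J. (M *\<^sub>v u k) \<bullet> (M *\<^sub>v u k)) \<le> fro_sq M"
proof -
  have "(\<Sum>k\<in>J. (M *\<^sub>v u k) \<bullet> (M *\<^sub>v u k)) = (\<Sum>a<m. \<Sum>k\<in>J. (u k \<bullet> row M a)\<^sup>2)"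
    by (rule image_mass_by_rows[OF M], insert orthonormal_familyD(1)[OF u], auto)
  also have "\<dots> \<le> (\<Sum>a<m. row M a \<bullet> row M a)"
    by (intro sum_mono bessel[OF u J], insert M, auto)
  finally show ?thesis using fro_sq_rows[OF M] by simp
qed

lemma quadratic_form_eigenbasis:
  assumes A: "(A::real mat) \<in> carrier_mat n n" and s: "transpose_mat A = A"
    and u: "orthonormal_family n {..<n} u" and eig: "\<And>k. k < n \<Longrightarrow> A *\<^sub>v u k = \<mu> k \<cdot>\<^sub>v u k"
    and x: "x \<in> carrier_vec n"
  shows "x \<bullet> (A *\<^sub>v x) = (\<Sum>k<n. \<mu> k * (u k \<bullet> x)\<^sup>2)"
proof -
  have uc: "\<And>k. k < n \<Longrightarrow> u k \<in> carrier_vec n" using u orthonormal_familyD by blast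
  have "u k \<bullet> (A *\<^sub>v x) = \<mu> k * (u k \<bullet> x)" if "k < n" for k
    using symmetric_dot[OF A s uc[OF that] x] eig[OF that] uc[OF that] x by simp
  then show ?thesis
    using parseval[OF u x, of "A *\<^sub>v x"] A by (simp add: power2_eq_square ac_simps)
qed

lemma dot_abs_le:
  assumes x: "x \<in> carrier_vec n" and y: "y \<in> carrier_vec n"
  shows "\<bar>x \<bullet> y\<bar> \<le> vnorm x * vnorm (y::real vec)"
proof -
  have "\<bar>x \<bullet> y\<bar>\<^sup>2 \<le> (vnorm x * vnorm y)\<^sup>2"
    using cauchy_schwarz[OF x y] by (simp add: power_mult_distrib vnorm_sq)
  then show ?thesis by (rule power2_le_imp_le, intro mult_nonneg_nonneg vnorm_nonneg)
qed

text \<open>The set in the definition of the operator norm is bounded (by the Frobenius norm).\<close>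
lemma op_norm_bdd:
  assumes E: "(E::real mat) \<in> carrier_mat m p"
  shows "bdd_above {vnorm (E *\<^sub>v x) | x. x \<in> carrier_vec (dim_col E) \<and> vnorm x = 1}"
proof (rule bdd_aboveI)
  fix y assume "y \<in> {vnorm (E *\<^sub>v x) | x. x \<in> carrier_vec (dim_col E) \<and> vnorm x = 1}"
  then obtain x where x: "x \<in> carrier_vec p" "vnorm x = 1" "y = vnorm (E *\<^sub>v x)" using E by auto
  have "(E *\<^sub>v x) \<bullet> (E *\<^sub>v x) = (\<Sum>a<m. (row E a \<bullet> x)\<^sup>2)"
    by (subst dot_self_as_sum[of _ m], insert E, auto)
  also have "\<dots> \<le> (\<Sum>a<m. (row E a \<bullet> row E a) * (x \<bullet> x))"
    by (intro sum_mono cauchy_schwarz[of _ p], insert E x, auto)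
  also have "\<dots> = fro_sq E" using fro_sq_rows[OF E] vnorm_sq[of x] x by simp
  finally have "y\<^sup>2 \<le> fro_sq E" using x(3) vnorm_sq by metis
  then show "y \<le> sqrt (fro_sq E)" using x(3) vnorm_nonneg real_le_rsqrt by blast
qed

lemma op_norm_upper:
  assumes E: "(E::real mat) \<in> carrier_mat m p" and y: "y \<in> carrier_vec p" "vnorm y = 1"
  shows "vnorm (E *\<^sub>v y) \<le> op_norm E"
  unfolding op_norm_def by (rule cSup_upper[OF _ op_norm_bdd[OF E]], insert y E, auto)

lemma op_norm_bound:
  assumes E: "(E::real mat) \<in> carrier_mat m p" and x: "x \<in> carrier_vec p"
  shows "vnorm (E *\<^sub>v x) \<le> op_norm E * vnorm x"
proof (cases "x = 0\<^sub>v p")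
  case True
  then have "E *\<^sub>v x = 0\<^sub>v m" using E by auto
  then show ?thesis using True by (simp add: vnorm_def)
next
  case False
  have pos: "x \<bullet> x > 0" using dot_self_pos[OF x False] .
  define c where "c = 1 / sqrt (x \<bullet> x)"
  have c: "c > 0" "c * vnorm x = 1" unfolding c_def vnorm_def using pos by auto
  have "vnorm (E *\<^sub>v (c \<cdot>\<^sub>v x)) \<le> op_norm E"
    by (rule op_norm_upper[OF E], insert normalize_unit[OF x False] x, auto simp: vnorm_def c_def)
  moreover have "E *\<^sub>v (c \<cdot>\<^sub>v x) = c \<cdot>\<^sub>v (E *\<^sub>v x)" using E x by (simp add: mult_mat_vec)
  moreover have "vnorm (c \<cdot>\<^sub>v (E *\<^sub>v x)) = c * vnorm (E *\<^sub>v x)" unfolding vnorm_def using c E x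
    by (simp add: real_sqrt_mult)
  ultimately have "c * vnorm (E *\<^sub>v x) \<le> op_norm E" by simp
  then have "c * vnorm (E *\<^sub>v x) * vnorm x \<le> op_norm E * vnorm x"
    by (rule mult_right_mono[OF _ vnorm_nonneg])
  moreover have "vnorm (E *\<^sub>v x) = c * vnorm (E *\<^sub>v x) * vnorm x"
    by (metis c(2) mult.assoc mult.commute mult_1_right)
  ultimately show ?thesis by simp
qed

lemma op_norm_nonneg:
  assumes E: "(E::real mat) \<in> carrier_mat m p" and p: "0 < p"
  shows "op_norm E \<ge> 0"
proof -
  have "vnorm (E *\<^sub>v unit_vec p 0) \<le> op_norm E"
    by (rule op_norm_upper[OF E], insert p, auto simp: vnorm_def)
  then show ?thesis using vnorm_nonneg order_trans by blast
qed

text \<open>Courant-Fischer type step behind Weyl's inequality: some nonzero \<open>x\<close> is orthogonal both to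
  the first \<open>j\<close> eigenvectors of \<open>A\<close> and to the last \<open>p - j - 1\<close> eigenvectors of \<open>B\<close> (fewer
  than \<open>p\<close> vectors in all); its Rayleigh quotients then lie below \<open>\<alpha> j\<close> and above \<open>\<beta> j\<close>.\<close>
lemma weyl_test_vector:
  assumes A: "(A::real mat) \<in> carrier_mat p p" and sA: "transpose_mat A = A"
    and B: "(B::real mat) \<in> carrier_mat p p" and sB: "transpose_mat B = B"
    and u: "orthonormal_family p {..<p} u" and eu: "\<And>k. k < p \<Longrightarrow> A *\<^sub>v u k = \<alpha> k \<cdot>\<^sub>v u k"
    and w: "orthonormal_family p {..<p} w" and ew: "\<And>k. k < p \<Longrightarrow> B *\<^sub>v w k = \<beta> k \<cdot>\<^sub>v w k"
    and sa: "\<And>i j. i \<le> j \<Longrightarrow> j < p \<Longrightarrow> \<alpha> j \<le> \<alpha> i"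
    and sb: "\<And>i j. i \<le> j \<Longrightarrow> j < p \<Longrightarrow> \<beta> j \<le> \<beta> i"
    and j: "j < p"
  shows "\<exists>x\<in>carrier_vec p. x \<noteq> 0\<^sub>v p \<and> x \<bullet> (A *\<^sub>v x) \<le> \<alpha> j * (x \<bullet> x) \<and> \<beta> j * (x \<bullet> x) \<le> x \<bullet> (B *\<^sub>v x)"
proof -
  have uc: "\<And>k. k < p \<Longrightarrow> u k \<in> carrier_vec p" using u orthonormal_familyD by blast
  have wc: "\<And>k. k < p \<Longrightarrow> w k \<in> carrier_vec p" using w orthonormal_familyD by blast
  define F where "F = u ` {..<j} \<union> w ` {Suc j..<p}"
  have "card F \<le> card (u ` {..<j}) + card (w ` {Suc j..<p})" unfolding F_def by (rule card_Un_le)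
  also have "\<dots> \<le> j + (p - Suc j)"
    using card_image_le[of "{..<j}" u] card_image_le[of "{Suc j..<p}" w] by auto
  finally have "card F < p" using j by auto
  moreover have "finite F" "F \<subseteq> carrier_vec p" unfolding F_def using uc wc j by auto
  ultimately obtain x where x: "x \<in> carrier_vec p" "x \<noteq> 0\<^sub>v p" "\<forall>v\<in>F. v \<bullet> x = 0"
    using nonzero_orthogonal_vector_exists by blast
  have "\<alpha> k * (u k \<bullet> x)\<^sup>2 \<le> \<alpha> j * (u k \<bullet> x)\<^sup>2" if "k < p" for k
    using x(3) sa[of j k] that unfolding F_def by (cases "k < j") (auto intro: mult_right_mono)
  then have "(\<Sum>k<p. \<alpha> k * (u k \<bullet> x)\<^sup>2) \<le> (\<Sum>k<p. \<alpha> j * (u k \<bullet> x)\<^sup>2)"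
    by (intro sum_mono) auto
  then have "x \<bullet> (A *\<^sub>v x) \<le> (\<Sum>k<p. \<alpha> j * (u k \<bullet> x)\<^sup>2)"
    using quadratic_form_eigenbasis[OF A sA u eu x(1)] by simp
  also have "\<dots> = \<alpha> j * (x \<bullet> x)" using parseval_norm[OF u x(1)] by (simp add: sum_distrib_left)
  finally have below: "x \<bullet> (A *\<^sub>v x) \<le> \<alpha> j * (x \<bullet> x)" .
  have "\<beta> j * (w k \<bullet> x)\<^sup>2 \<le> \<beta> k * (w k \<bullet> x)\<^sup>2" if "k < p" for k
    using x(3) sb[of k j] that j unfolding F_def by (cases "j < k") (auto intro: mult_right_mono)
  then have "(\<Sum>k<p. \<beta> j * (w k \<bullet> x)\<^sup>2) \<le> (\<Sum>k<p. \<beta> k * (w k \<bullet> x)\<^sup>2)"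
    by (intro sum_mono) auto
  then have "(\<Sum>k<p. \<beta> j * (w k \<bullet> x)\<^sup>2) \<le> x \<bullet> (B *\<^sub>v x)"
    using quadratic_form_eigenbasis[OF B sB w ew x(1)] by simp
  moreover have "\<beta> j * (x \<bullet> x) = (\<Sum>k<p. \<beta> j * (w k \<bullet> x)\<^sup>2)"
    using parseval_norm[OF w x(1)] by (simp add: sum_distrib_left)
  ultimately show ?thesis using below x by auto
qed

lemma weyl:
  assumes A: "(A::real mat) \<in> carrier_mat p p" and sA: "transpose_mat A = A"
    and B: "(B::real mat) \<in> carrier_mat p p" and sB: "transpose_mat B = B"
    and u: "orthonormal_family p {..<p} u" and eu: "\<And>k. k < p \<Longrightarrow> A *\<^sub>v u k = \<alpha> k \<cdot>\<^sub>v u k"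
    and w: "orthonormal_family p {..<p} w" and ew: "\<And>k. k < p \<Longrightarrow> B *\<^sub>v w k = \<beta> k \<cdot>\<^sub>v w k"
    and sa: "\<And>i j. i \<le> j \<Longrightarrow> j < p \<Longrightarrow> \<alpha> j \<le> \<alpha> i"
    and sb: "\<And>i j. i \<le> j \<Longrightarrow> j < p \<Longrightarrow> \<beta> j \<le> \<beta> i"
    and j: "j < p"
  shows "\<bar>\<beta> j - \<alpha> j\<bar> \<le> op_norm (B - A)"
proof -
  have quad_diff: "\<bar>x \<bullet> (B *\<^sub>v x) - x \<bullet> (A *\<^sub>v x)\<bar> \<le> op_norm (B - A) * (x \<bullet> x)"
    if x: "x \<in> carrier_vec p" for x
  proof -
    have "x \<bullet> (B *\<^sub>v x) - x \<bullet> (A *\<^sub>v x) = x \<bullet> ((B - A) *\<^sub>v x)"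
      using A B x by (simp add: minus_mult_distrib_mat_vec scalar_prod_minus_distrib[of _ p])
    also have "\<bar>\<dots>\<bar> \<le> vnorm x * vnorm ((B - A) *\<^sub>v x)"
      by (rule dot_abs_le[of _ p], insert x A B, auto intro!: mult_mat_vec_in_carrier[of _ p p])
    also have "\<dots> \<le> vnorm x * (op_norm (B - A) * vnorm x)"
      by (rule mult_left_mono[OF op_norm_bound[of _ p p] vnorm_nonneg], insert A B x, auto)
    also have "\<dots> = op_norm (B - A) * (x \<bullet> x)" using vnorm_sq[of x] by (simp add: power2_eq_square)
    finally show ?thesis .
  qed
  obtain x where x: "x \<in> carrier_vec p" "x \<noteq> 0\<^sub>v p" "x \<bullet> (A *\<^sub>v x) \<le> \<alpha> j * (x \<bullet> x)"
    "\<beta> j * (x \<bullet> x) \<le> x \<bullet> (B *\<^sub>v x)"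
    using weyl_test_vector[OF A sA B sB u eu w ew sa sb j] by blast
  obtain y where y: "y \<in> carrier_vec p" "y \<noteq> 0\<^sub>v p" "y \<bullet> (B *\<^sub>v y) \<le> \<beta> j * (y \<bullet> y)"
    "\<alpha> j * (y \<bullet> y) \<le> y \<bullet> (A *\<^sub>v y)"
    using weyl_test_vector[OF B sB A sA w ew u eu sb sa j] by blast
  have "(\<beta> j - \<alpha> j) * (x \<bullet> x) \<le> op_norm (B - A) * (x \<bullet> x)"
    using quad_diff[OF x(1)] x(3,4) unfolding left_diff_distrib abs_le_iff by linarith
  then have 1: "\<beta> j - \<alpha> j \<le> op_norm (B - A)" using dot_self_pos[OF x(1,2)] by simp
  have "(\<alpha> j - \<beta> j) * (y \<bullet> y) \<le> op_norm (B - A) * (y \<bullet> y)"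
    using quad_diff[OF y(1)] y(3,4) unfolding left_diff_distrib abs_le_iff by linarith
  then have 2: "\<alpha> j - \<beta> j \<le> op_norm (B - A)" using dot_self_pos[OF y(1,2)] by simp
  show ?thesis using 1 2 by linarith
qed

text \<open>Backward differences of a sequence on \<open>{0..m}\<close>, with the last value kept; they telescope
  back to the sequence.  For a decreasing sequence they are nonnegative except possibly the last.\<close>
definition tail_diff :: "(nat \<Rightarrow> real) \<Rightarrow> nat \<Rightarrow> nat \<Rightarrow> real" where
  "tail_diff a m t = (if t = m then a m else a t - a (Suc t))"

lemma tail_diff_telescope:
  assumes i: "i < Suc m"
  shows "a i = (\<Sum>t<Suc m. if i \<le> t then tail_diff a m t else 0)"
proof -
  have "(\<Sum>t<Suc m. if i \<le> t then tail_diff a m t else 0)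
      = (\<Sum>t<m. if i \<le> t then a t - a (Suc t) else 0) + a m"
    using i unfolding tail_diff_def by (simp, intro sum.cong refl, auto)
  also have "(\<Sum>t<m. if i \<le> t then a t - a (Suc t) else 0) = (\<Sum>t\<in>{i..<m}. a t - a (Suc t))"
    by (rule sum.mono_neutral_cong_right, auto)
  also have "\<dots> = a i - a m"
    using sum_Suc_diff'[of i m "\<lambda>t. - a t"] i by (simp add: algebra_simps)
  finally show ?thesis by simp
qed

definition corner_mass :: "(nat \<Rightarrow> nat \<Rightarrow> real) \<Rightarrow> nat \<Rightarrow> nat \<Rightarrow> nat \<Rightarrow> real" where
  "corner_mass X n t u = (\<Sum>i<n. \<Sum>k<n. if i \<le> t \<and> k \<le> u then X i k else 0)"

lemma sum_reorder_4:
  "(\<Sum>i\<in>I. \<Sum>k\<in>K. \<Sum>u\<in>U. \<Sum>t\<in>T. f i k u t) = (\<Sum>t\<in>T. \<Sum>u\<in>U. \<Sum>i\<in>I. \<Sum>k\<in>K. f i k u t)"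
proof -
  have "(\<Sum>i\<in>I. \<Sum>k\<in>K. \<Sum>u\<in>U. \<Sum>t\<in>T. f i k u t) = (\<Sum>i\<in>I. \<Sum>k\<in>K. \<Sum>t\<in>T. \<Sum>u\<in>U. f i k u t)"
    by (rule sum.cong[OF refl], rule sum.cong[OF refl], rule sum.swap)
  also have "\<dots> = (\<Sum>i\<in>I. \<Sum>t\<in>T. \<Sum>k\<in>K. \<Sum>u\<in>U. f i k u t)"
    by (rule sum.cong[OF refl], rule sum.swap)
  also have "\<dots> = (\<Sum>t\<in>T. \<Sum>i\<in>I. \<Sum>u\<in>U. \<Sum>k\<in>K. f i k u t)"
    by (subst sum.swap, rule sum.cong[OF refl], rule sum.cong[OF refl], rule sum.swap)
  also have "\<dots> = (\<Sum>t\<in>T. \<Sum>u\<in>U. \<Sum>i\<in>I. \<Sum>k\<in>K. f i k u t)"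
    by (rule sum.cong[OF refl], rule sum.swap)
  finally show ?thesis .
qed

lemma summation_by_parts_2d:
  assumes n: "n = Suc m"
  shows "(\<Sum>i<n. \<Sum>k<n. X i k * a i * b k)
     = (\<Sum>t<n. \<Sum>u<n. tail_diff a m t * tail_diff b m u * corner_mass X n t u)"
proof -
  let ?f = "\<lambda>t i. if i \<le> t then tail_diff a m t else 0"
  let ?g = "\<lambda>u k. if k \<le> u then tail_diff b m u else 0"
  have "(\<Sum>i<n. \<Sum>k<n. X i k * a i * b k) = (\<Sum>i<n. \<Sum>k<n. X i k * (\<Sum>t<n. ?f t i) * (\<Sum>u<n. ?g u k))"
    using tail_diff_telescope[of _ m a] tail_diff_telescope[of _ m b] n by (intro sum.cong refl) auto
  also have "\<dots> = (\<Sum>i<n. \<Sum>k<n. \<Sum>u<n. \<Sum>t<n. X i k * ?f t i * ?g u k)"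
    by (simp add: sum_distrib_left sum_distrib_right mult.assoc)
  also have "\<dots> = (\<Sum>t<n. \<Sum>u<n. \<Sum>i<n. \<Sum>k<n. X i k * ?f t i * ?g u k)"
    by (rule sum_reorder_4)
  also have "\<dots> = (\<Sum>t<n. \<Sum>u<n. tail_diff a m t * tail_diff b m u * corner_mass X n t u)"
    unfolding corner_mass_def by (intro sum.cong refl, simp add: sum_distrib_left, intro sum.cong refl, auto)
  finally show ?thesis .
qed

lemma sum_indicator_atMost: "t < n \<Longrightarrow> (\<Sum>i<n. (if i \<le> t then 1 else 0::real)) = real t + 1"
proof -
  assume t: "t < n"
  have "(\<Sum>i<n. (if i \<le> t then 1 else 0::real)) = (\<Sum>i\<in>{..t}. 1)"
    by (rule sum.mono_neutral_cong_right, insert t, auto)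
  then show ?thesis by simp
qed

lemma corner_mass_identity:
  assumes "t < n" "u < n"
  shows "corner_mass (\<lambda>i k. if i = k then 1 else 0) n t u = real (min t u) + 1"
proof -
  have "(\<Sum>k<n. if i \<le> t \<and> k \<le> u then (if i = k then 1 else 0) else 0)
      = (if i \<le> min t u then 1 else (0::real))" if "i < n" for i
  proof -
    have "(\<Sum>k<n. if i \<le> t \<and> k \<le> u then (if i = k then 1 else 0) else 0)
        = (\<Sum>k<n. if k = i then (if i \<le> min t u then 1 else (0::real)) else 0)"
      by (intro sum.cong) auto
    then show ?thesis using that by simp
  qed
  then have "corner_mass (\<lambda>i k. if i = k then 1 else 0) n t u = (\<Sum>i<n. if i \<le> min t u then 1 else 0)"
    unfolding corner_mass_def by (intro sum.cong) auto
  then show ?thesis using sum_indicator_atMost[of "min t u" n] assms by simp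
qed

lemma corner_mass_doubly_stochastic:
  assumes W0: "\<And>i k. i < n \<Longrightarrow> k < n \<Longrightarrow> 0 \<le> W i k"
    and rows: "\<And>i. i < n \<Longrightarrow> (\<Sum>k<n. W i k) = 1"
    and cols: "\<And>k. k < n \<Longrightarrow> (\<Sum>i<n. W i k) = 1"
    and tu: "t < n" "u < n"
  shows "corner_mass W n t u \<le> real (min t u) + 1"
    and "t = n - 1 \<or> u = n - 1 \<Longrightarrow> corner_mass W n t u = real (min t u) + 1"
proof -
  have "(\<Sum>k<n. if i \<le> t then W i k else 0) = (if i \<le> t then 1 else 0)" if "i < n" for i
    using rows[OF that] by (cases "i \<le> t") simp_all
  then have rows_t: "(\<Sum>i<n. \<Sum>k<n. if i \<le> t then W i k else 0) = real t + 1"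
    using sum_indicator_atMost[OF tu(1)] by simp
  have "(\<Sum>i<n. if k \<le> u then W i k else 0) = (if k \<le> u then 1 else 0)" if "k < n" for k
    using cols[OF that] by (cases "k \<le> u") simp_all
  then have cols_u: "(\<Sum>i<n. \<Sum>k<n. if k \<le> u then W i k else 0) = real u + 1"
    using sum_indicator_atMost[OF tu(2)] by (subst sum.swap) simp
  have "corner_mass W n t u \<le> (\<Sum>i<n. \<Sum>k<n. if i \<le> t then W i k else 0)"
    unfolding corner_mass_def by (intro sum_mono) (auto intro: W0)
  moreover have "corner_mass W n t u \<le> (\<Sum>i<n. \<Sum>k<n. if k \<le> u then W i k else 0)"
    unfolding corner_mass_def by (intro sum_mono) (auto intro: W0)
  ultimately show "corner_mass W n t u \<le> real (min t u) + 1"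
    using rows_t cols_u by (simp add: min_def)
  assume "t = n - 1 \<or> u = n - 1"
  then show "corner_mass W n t u = real (min t u) + 1"
  proof
    assume "t = n - 1"
    then have "corner_mass W n t u = (\<Sum>i<n. \<Sum>k<n. if k \<le> u then W i k else 0)"
      unfolding corner_mass_def using tu by (intro sum.cong refl) auto
    moreover have "min t u = u" using tu \<open>t = n - 1\<close> by simp
    ultimately show ?thesis using cols_u by simp
  next
    assume "u = n - 1"
    then have "corner_mass W n t u = (\<Sum>i<n. \<Sum>k<n. if i \<le> t then W i k else 0)"
      unfolding corner_mass_def using tu by (intro sum.cong refl) auto
    moreover have "min t u = t" using tu \<open>u = n - 1\<close> by simp
    ultimately show ?thesis using rows_t by simp
  qed
qed

text \<open>After summation by parts only corner masses are compared,
  and the coefficients in front of them are nonnegative where the masses can differ.\<close>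
lemma doubly_stochastic_rearrangement:
  fixes a b :: "nat \<Rightarrow> real" and W :: "nat \<Rightarrow> nat \<Rightarrow> real"
  assumes a: "\<And>i j. i \<le> j \<Longrightarrow> j < n \<Longrightarrow> a j \<le> a i"
    and b: "\<And>i j. i \<le> j \<Longrightarrow> j < n \<Longrightarrow> b j \<le> b i"
    and W0: "\<And>i k. i < n \<Longrightarrow> k < n \<Longrightarrow> 0 \<le> W i k"
    and rows: "\<And>i. i < n \<Longrightarrow> (\<Sum>k<n. W i k) = 1"
    and cols: "\<And>k. k < n \<Longrightarrow> (\<Sum>i<n. W i k) = 1"
  shows "(\<Sum>i<n. \<Sum>k<n. W i k * a i * b k) \<le> (\<Sum>i<n. a i * b i)"
proof (cases n)
  case 0 then show ?thesis by simp
next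
  case (Suc m)
  define I :: "nat \<Rightarrow> nat \<Rightarrow> real" where "I = (\<lambda>i k. if i = k then 1 else 0)"
  have "tail_diff a m t * tail_diff b m u * corner_mass W n t u
      \<le> tail_diff a m t * tail_diff b m u * corner_mass I n t u" if tu: "t < n" "u < n" for t u
  proof (cases "t = m \<or> u = m")
    case True then show ?thesis
      using corner_mass_doubly_stochastic(2)[OF W0 rows cols tu] corner_mass_identity[OF tu] Suc
      by (simp add: I_def)
  next
    case False
    then have "0 \<le> tail_diff a m t" "0 \<le> tail_diff b m u"
      unfolding tail_diff_def using tu a[of t "Suc t"] b[of u "Suc u"] Suc by auto
    then show ?thesis
      using corner_mass_doubly_stochastic(1)[OF W0 rows cols tu] corner_mass_identity[OF tu]
      by (simp add: I_def mult_left_mono)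
  qed
  then have "(\<Sum>i<n. \<Sum>k<n. W i k * a i * b k) \<le> (\<Sum>i<n. \<Sum>k<n. I i k * a i * b k)"
    unfolding summation_by_parts_2d[OF Suc] by (intro sum_mono) auto
  also have "\<dots> = (\<Sum>i<n. a i * b i)"
  proof (intro sum.cong refl)
    fix i assume "i \<in> {..<n}"
    have "(\<Sum>k<n. I i k * a i * b k) = (\<Sum>k<n. if k = i then a i * b i else 0)"
      unfolding I_def by (intro sum.cong) auto
    then show "(\<Sum>k<n. I i k * a i * b k) = a i * b i" using \<open>i \<in> {..<n}\<close> by simp
  qed
  finally show ?thesis .
qed

lemma overlap_doubly_stochastic:
  assumes u: "orthonormal_family p {..<p} u" and w: "orthonormal_family p {..<p} w"
  shows "\<And>i. i < p \<Longrightarrow> (\<Sum>k<p. (w i \<bullet> u k)\<^sup>2) = 1"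
    and "\<And>k. k < p \<Longrightarrow> (\<Sum>i<p. (w i \<bullet> u k)\<^sup>2) = 1"
proof -
  have uc: "\<And>k. k < p \<Longrightarrow> u k \<in> carrier_vec p" using u orthonormal_familyD by blast
  have wc: "\<And>k. k < p \<Longrightarrow> w k \<in> carrier_vec p" using w orthonormal_familyD by blast
  fix i assume i: "i < p"
  have "(\<Sum>k<p. (w i \<bullet> u k)\<^sup>2) = (\<Sum>k<p. (u k \<bullet> w i)\<^sup>2)"
    by (intro sum.cong refl, subst comm_scalar_prod[of _ p], insert uc wc i, auto)
  also have "\<dots> = w i \<bullet> w i" using parseval_norm[OF u wc[OF i]] by simp
  finally show "(\<Sum>k<p. (w i \<bullet> u k)\<^sup>2) = 1" using orthonormal_familyD(2)[OF w, of i i] i by simp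
next
  fix k assume k: "k < p"
  have "(\<Sum>i<p. (w i \<bullet> u k)\<^sup>2) = u k \<bullet> u k"
    using parseval_norm[OF w orthonormal_familyD(1)[OF u, of k]] k by simp
  then show "(\<Sum>i<p. (w i \<bullet> u k)\<^sup>2) = 1" using orthonormal_familyD(2)[OF u, of k k] k by simp
qed

lemma fro_sq_difference_eigenbases:
  assumes A: "(A::real mat) \<in> carrier_mat p p"
    and B: "(B::real mat) \<in> carrier_mat p p" and sB: "transpose_mat B = B"
    and u: "orthonormal_family p {..<p} u" and eu: "\<And>k. k < p \<Longrightarrow> A *\<^sub>v u k = \<alpha> k \<cdot>\<^sub>v u k"
    and w: "orthonormal_family p {..<p} w" and ew: "\<And>k. k < p \<Longrightarrow> B *\<^sub>v w k = \<beta> k \<cdot>\<^sub>v w k"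
  shows "fro_sq (B - A) = (\<Sum>i<p. \<Sum>k<p. (w i \<bullet> u k)\<^sup>2 * (\<beta> i - \<alpha> k)\<^sup>2)"
proof -
  have uc: "\<And>k. k < p \<Longrightarrow> u k \<in> carrier_vec p" using u orthonormal_familyD by blast
  have wc: "\<And>k. k < p \<Longrightarrow> w k \<in> carrier_vec p" using w orthonormal_familyD by blast
  have E: "B - A \<in> carrier_mat p p" using A B by auto
  have entry: "w i \<bullet> ((B - A) *\<^sub>v u k) = (\<beta> i - \<alpha> k) * (w i \<bullet> u k)" if ik: "i < p" "k < p" for i k
  proof -
    have "w i \<bullet> ((B - A) *\<^sub>v u k) = (B *\<^sub>v w i) \<bullet> u k - w i \<bullet> (A *\<^sub>v u k)"
      using A B uc[OF ik(2)] wc[OF ik(1)] symmetric_dot[OF B sB wc[OF ik(1)] uc[OF ik(2)]]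
      by (simp add: minus_mult_distrib_mat_vec scalar_prod_minus_distrib[of _ p])
    then show ?thesis using ew[OF ik(1)] eu[OF ik(2)] wc[OF ik(1)] uc[OF ik(2)]
      by (simp add: algebra_simps)
  qed
  have "fro_sq (B - A) = (\<Sum>k<p. \<Sum>i<p. (w i \<bullet> ((B - A) *\<^sub>v u k))\<^sup>2)"
    unfolding fro_sq_orthonormal_basis[OF E u]
    by (intro sum.cong refl, subst parseval_norm[OF w], insert E, auto)
  also have "\<dots> = (\<Sum>i<p. \<Sum>k<p. (w i \<bullet> u k)\<^sup>2 * (\<beta> i - \<alpha> k)\<^sup>2)"
    by (subst sum.swap, intro sum.cong refl, subst entry, auto simp: power_mult_distrib)
  finally show ?thesis .
qed

text \<open>Expanding the squares in
  the previous identity, the cross term is controlled by the rearrangement inequality.\<close>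
lemma hoffman_wielandt:
  assumes A: "(A::real mat) \<in> carrier_mat p p"
    and B: "(B::real mat) \<in> carrier_mat p p" and sB: "transpose_mat B = B"
    and u: "orthonormal_family p {..<p} u" and eu: "\<And>k. k < p \<Longrightarrow> A *\<^sub>v u k = \<alpha> k \<cdot>\<^sub>v u k"
    and w: "orthonormal_family p {..<p} w" and ew: "\<And>k. k < p \<Longrightarrow> B *\<^sub>v w k = \<beta> k \<cdot>\<^sub>v w k"
    and sa: "\<And>i j. i \<le> j \<Longrightarrow> j < p \<Longrightarrow> \<alpha> j \<le> \<alpha> i"
    and sb: "\<And>i j. i \<le> j \<Longrightarrow> j < p \<Longrightarrow> \<beta> j \<le> \<beta> i"
  shows "(\<Sum>k<p. (\<beta> k - \<alpha> k)\<^sup>2) \<le> fro_sq (B - A)"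
proof -
  define W where "W i k = (w i \<bullet> u k)\<^sup>2" for i k
  have W0: "0 \<le> W i k" for i k unfolding W_def by simp
  note rows = overlap_doubly_stochastic(1)[OF u w, folded W_def]
  note cols = overlap_doubly_stochastic(2)[OF u w, folded W_def]
  have "(\<Sum>i<p. \<Sum>k<p. W i k * \<beta> i * \<alpha> k) \<le> (\<Sum>i<p. \<beta> i * \<alpha> i)"
    by (rule doubly_stochastic_rearrangement[OF sb sa W0 rows cols])
  moreover have "(\<Sum>i<p. \<Sum>k<p. W i k * (\<beta> i)\<^sup>2) = (\<Sum>i<p. (\<beta> i)\<^sup>2)"
    by (intro sum.cong refl, simp add: sum_distrib_right[symmetric] rows)
  moreover have "(\<Sum>i<p. \<Sum>k<p. W i k * (\<alpha> k)\<^sup>2) = (\<Sum>k<p. (\<alpha> k)\<^sup>2)"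
    by (subst sum.swap, intro sum.cong refl, simp add: sum_distrib_right[symmetric] cols)
  moreover have "fro_sq (B - A) = (\<Sum>i<p. \<Sum>k<p. W i k * (\<beta> i)\<^sup>2)
      + (\<Sum>i<p. \<Sum>k<p. W i k * (\<alpha> k)\<^sup>2) - 2 * (\<Sum>i<p. \<Sum>k<p. W i k * \<beta> i * \<alpha> k)"
  proof -
    have "W i k * (\<beta> i - \<alpha> k)\<^sup>2 = W i k * (\<beta> i)\<^sup>2 + W i k * (\<alpha> k)\<^sup>2 - 2 * (W i k * \<beta> i * \<alpha> k)"
      for i k by (simp add: power2_diff algebra_simps)
    then show ?thesis using fro_sq_difference_eigenbases[OF A B sB u eu w ew]
      unfolding W_def[symmetric] by (simp add: sum.distrib sum_subtractf sum_distrib_left)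
  qed
  moreover have "(\<Sum>k<p. (\<beta> k - \<alpha> k)\<^sup>2)
      = (\<Sum>i<p. (\<beta> i)\<^sup>2) + (\<Sum>k<p. (\<alpha> k)\<^sup>2) - 2 * (\<Sum>i<p. \<beta> i * \<alpha> i)"
  proof -
    have "(\<beta> k - \<alpha> k)\<^sup>2 = (\<beta> k)\<^sup>2 + (\<alpha> k)\<^sup>2 - 2 * (\<beta> k * \<alpha> k)" for k
      by (simp add: power2_diff algebra_simps)
    then show ?thesis by (simp add: sum.distrib sum_subtractf sum_distrib_left)
  qed
  ultimately show ?thesis by linarith
qed

lemma orthonormal_cols_family:
  assumes V: "(V::real mat) \<in> carrier_mat p d" and on: "orthonormal_cols V"
  shows "orthonormal_family p {..<d} (col V)"
  unfolding orthonormal_family_def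
proof (intro conjI ballI)
  fix i assume "i \<in> {..<d}" then show "col V i \<in> carrier_vec p" using V by auto
next
  fix i k assume ik: "i \<in> {..<d}" "k \<in> {..<d}"
  have "(transpose_mat V * V) $$ (i,k) = col V i \<bullet> col V k" using ik V by auto
  also have "transpose_mat V * V = 1\<^sub>m d" using on V unfolding orthonormal_cols_def by auto
  finally show "col V i \<bullet> col V k = (if i = k then 1 else 0)" using ik by auto
qed

lemma orthonormal_cols_isometry:
  assumes V: "(V::real mat) \<in> carrier_mat p d" and on: "orthonormal_cols V" and x: "x \<in> carrier_vec d"
  shows "(V *\<^sub>v x) \<bullet> (V *\<^sub>v x) = x \<bullet> x"
proof -
  have "(V *\<^sub>v x) \<bullet> (V *\<^sub>v x) = (transpose_mat V *\<^sub>v (V *\<^sub>v x)) \<bullet> x"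
    by (rule transpose_vec_mult_scalar[OF V x, symmetric], insert V, auto)
  also have "transpose_mat V *\<^sub>v (V *\<^sub>v x) = (transpose_mat V * V) *\<^sub>v x"
    by (rule assoc_mult_mat_vec[symmetric, of _ d p], insert V x, auto)
  also have "\<dots> = x" using on V x unfolding orthonormal_cols_def by auto
  finally show ?thesis .
qed

lemma orthonormal_cols_transpose_contraction:
  assumes V: "(V::real mat) \<in> carrier_mat p d" and on: "orthonormal_cols V"
    and y: "y \<in> carrier_vec p" and dp: "d \<le> p"
  shows "(transpose_mat V *\<^sub>v y) \<bullet> (transpose_mat V *\<^sub>v y) \<le> y \<bullet> y"
proof -
  have "(transpose_mat V *\<^sub>v y) \<bullet> (transpose_mat V *\<^sub>v y) = (\<Sum>a<d. (col V a \<bullet> y)\<^sup>2)"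
    by (subst dot_self_as_sum[of _ d], insert V, auto intro!: mult_mat_vec_in_carrier[of _ d p])
  also have "\<dots> \<le> y \<bullet> y" by (rule bessel[OF orthonormal_cols_family[OF V on] _ y], insert dp, auto)
  finally show ?thesis .
qed

lemma cross_gram_contraction:
  assumes V: "(V::real mat) \<in> carrier_mat p d" and on: "orthonormal_cols V"
    and Vh: "(Vh::real mat) \<in> carrier_mat p d" and onh: "orthonormal_cols Vh"
    and x: "x \<in> carrier_vec d" and dp: "d \<le> p"
  shows "((transpose_mat Vh * V) *\<^sub>v x) \<bullet> ((transpose_mat Vh * V) *\<^sub>v x) \<le> x \<bullet> x"
proof -
  have "(transpose_mat Vh * V) *\<^sub>v x = transpose_mat Vh *\<^sub>v (V *\<^sub>v x)"
    by (rule assoc_mult_mat_vec[of _ d p], insert V Vh x, auto)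
  moreover have "(transpose_mat Vh *\<^sub>v (V *\<^sub>v x)) \<bullet> (transpose_mat Vh *\<^sub>v (V *\<^sub>v x)) \<le> (V *\<^sub>v x) \<bullet> (V *\<^sub>v x)"
    by (rule orthonormal_cols_transpose_contraction[OF Vh onh _ dp], insert V, auto)
  ultimately show ?thesis using orthonormal_cols_isometry[OF V on x] by simp
qed

lemma contraction_gram_eigenbasis:
  assumes M: "(M::real mat) \<in> carrier_mat m d"
    and contr: "\<And>x. x \<in> carrier_vec d \<Longrightarrow> (M *\<^sub>v x) \<bullet> (M *\<^sub>v x) \<le> x \<bullet> x"
  shows "\<exists>w \<nu>. orthonormal_family d {..<d} w \<and> (\<forall>i<d. (transpose_mat M * M) *\<^sub>v w i = \<nu> i \<cdot>\<^sub>v w i)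
     \<and> (\<forall>i<d. 0 \<le> \<nu> i \<and> \<nu> i \<le> 1)
     \<and> (\<forall>i<d. \<forall>k<d. (M *\<^sub>v w i) \<bullet> (M *\<^sub>v w k) = (if i = k then \<nu> i else 0))
     \<and> (\<Sum>i<d. \<nu> i) = fro_sq M"
proof -
  let ?N = "transpose_mat M * M"
  have N: "?N \<in> carrier_mat d d" using M by auto
  have "transpose_mat ?N = ?N" using transpose_mult[of "transpose_mat M" d m M d] M by auto
  then obtain w \<nu> where w: "orthonormal_family d {..<d} w" "\<forall>i<d. ?N *\<^sub>v w i = \<nu> i \<cdot>\<^sub>v w i"
    using spectral_theorem[OF N] by blast
  have wc: "\<And>k. k < d \<Longrightarrow> w k \<in> carrier_vec d" using w(1) orthonormal_familyD by blast
  have images: "(M *\<^sub>v w i) \<bullet> (M *\<^sub>v w k) = (if i = k then \<nu> i else 0)" if ik: "i < d" "k < d" for i k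
  proof -
    have "(M *\<^sub>v w i) \<bullet> (M *\<^sub>v w k) = (transpose_mat M *\<^sub>v (M *\<^sub>v w i)) \<bullet> w k"
      by (rule transpose_vec_mult_scalar[OF M wc[OF ik(2)], symmetric], insert M, auto)
    also have "transpose_mat M *\<^sub>v (M *\<^sub>v w i) = ?N *\<^sub>v w i"
      by (rule assoc_mult_mat_vec[symmetric, of _ d m], insert M wc ik, auto)
    also have "(?N *\<^sub>v w i) \<bullet> w k = \<nu> i * (w i \<bullet> w k)"
      using w(2) ik smult_scalar_prod_distrib[OF wc[OF ik(1)] wc[OF ik(2)]] by simp
    also have "\<dots> = (if i = k then \<nu> i else 0)" using orthonormal_familyD(2)[OF w(1), of i k] ik by simp
    finally show ?thesis .
  qed
  have "0 \<le> \<nu> i \<and> \<nu> i \<le> 1" if i: "i < d" for i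
    using images[OF i i] dot_self_nonneg[of "M *\<^sub>v w i"] contr[OF wc[OF i]]
      orthonormal_familyD(2)[OF w(1), of i i] i by simp
  moreover have "(\<Sum>i<d. \<nu> i) = fro_sq M" using fro_sq_orthonormal_basis[OF M w(1)] images by simp
  ultimately show ?thesis using w images by blast
qed

lemma prod_linear_factors_upt:
  "(\<Prod>i<d. [:- f i, 1:]) = prod_list (map (\<lambda>x. [:-x, 1:]) (map f [0..<d]))"
  unfolding map_map comp_def by (subst prod.distinct_set_conv_list[symmetric], auto simp: atLeast0LessThan)

text \<open>The defining property of \<open>singular_values\<close> is satisfiable when the Gram matrix has an
  eigenbasis with nonnegative eigenvalues: take the square roots of the decreasingly sorted
  eigenvalues.  Hence the singular values enjoy that property.\<close>
lemma singular_values_spec: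
  assumes M: "(M::real mat) \<in> carrier_mat m d"
    and w: "orthonormal_family d {..<d} w"
    and eig: "\<And>i. i < d \<Longrightarrow> (transpose_mat M * M) *\<^sub>v w i = \<nu> i \<cdot>\<^sub>v w i"
    and nu0: "\<And>i. i < d \<Longrightarrow> 0 \<le> \<nu> i"
  shows "(\<forall>i<d. 0 \<le> singular_values M i) \<and>
    char_poly (transpose_mat M * M) = (\<Prod>i<d. [:- ((singular_values M i)\<^sup>2), 1:])"
proof -
  define P where "P = (\<lambda>\<sigma>::nat \<Rightarrow> real.
     (\<forall>i j. i \<le> j \<longrightarrow> j < dim_col M \<longrightarrow> \<sigma> j \<le> \<sigma> i) \<and>
     (\<forall>i < dim_col M. 0 \<le> \<sigma> i) \<and>
     char_poly (transpose_mat M * M) = (\<Prod>i<dim_col M. [:- ((\<sigma> i)\<^sup>2), 1:]))"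
  have dc: "dim_col M = d" using M by auto
  define xs where "xs = rev (sort (map \<nu> [0..<d]))"
  have lxs: "length xs = d" unfolding xs_def by simp
  have mxs: "mset xs = mset (map \<nu> [0..<d])" unfolding xs_def by simp
  have xs0: "0 \<le> xs ! i" if "i < d" for i
  proof -
    have "xs ! i \<in> set xs" using that lxs by auto
    then have "xs ! i \<in> set (map \<nu> [0..<d])" using mxs by (metis set_mset_mset)
    then show ?thesis using nu0 by auto
  qed
  have "P (\<lambda>i. sqrt (xs ! i))"
    unfolding P_def dc
  proof (intro conjI allI impI)
    fix i j assume ij: "i \<le> j" "j < d"
    have "xs ! j \<le> xs ! i" unfolding xs_def
      using sorted_nth_mono[OF sorted_sort, of "d - Suc j" "d - Suc i" "map \<nu> [0..<d]"] ij
      by (simp add: rev_nth)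
    then show "sqrt (xs ! j) \<le> sqrt (xs ! i)" by simp
  next
    fix i assume "i < d" then show "0 \<le> sqrt (xs ! i)" using xs0 by simp
  next
    have "map (\<lambda>i. xs ! i) [0..<d] = xs" by (rule nth_equalityI) (auto simp: lxs)
    then have "(\<Prod>i<d. [:- (xs ! i), 1:]) = prod_list (map (\<lambda>x. [:-x, 1:]) xs)"
      using prod_linear_factors_upt[of "\<lambda>i. xs ! i" d] by simp
    moreover have "(\<Prod>i<d. [:- ((sqrt (xs ! i))\<^sup>2), 1:]) = (\<Prod>i<d. [:- (xs ! i), 1:])"
      using xs0 by (intro prod.cong refl) simp
    ultimately have "(\<Prod>i<d. [:- ((sqrt (xs ! i))\<^sup>2), 1:]) = prod_list (map (\<lambda>x. [:-x, 1:]) xs)"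
      by simp
    also have "\<dots> = prod_mset (mset (map (\<lambda>x. [:-x, 1::real:]) (map \<nu> [0..<d])))"
      by (simp only: prod_mset_prod_list[symmetric] mset_map mxs)
    also have "\<dots> = char_poly (transpose_mat M * M)"
      unfolding prod_mset_prod_list by (rule char_poly_eigenbasis[OF w _ eig, symmetric], insert M, auto)
    finally show "char_poly (transpose_mat M * M) = (\<Prod>i<d. [:- ((sqrt (xs ! i))\<^sup>2), 1:])" ..
  qed
  then have "P (singular_values M)"
    unfolding singular_values_def P_def[symmetric] by (rule someI[of P])
  then show ?thesis unfolding P_def dc by auto
qed

text \<open>The singular values of a contraction lie in \<open>[0,1]\<close>, and their squares add up to the squared
  Frobenius norm: they are the square roots of the Gram eigenvalues, with multiplicity.\<close>
lemma contraction_singular_values: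
  assumes M: "(M::real mat) \<in> carrier_mat m d"
    and contr: "\<And>x. x \<in> carrier_vec d \<Longrightarrow> (M *\<^sub>v x) \<bullet> (M *\<^sub>v x) \<le> x \<bullet> x"
  defines "\<sigma> \<equiv> singular_values M"
  shows "\<forall>i<d. 0 \<le> \<sigma> i \<and> \<sigma> i \<le> 1" and "(\<Sum>i<d. (\<sigma> i)\<^sup>2) = fro_sq M"
proof -
  obtain w \<nu> where w: "orthonormal_family d {..<d} w" "\<forall>i<d. (transpose_mat M * M) *\<^sub>v w i = \<nu> i \<cdot>\<^sub>v w i"
    "\<forall>i<d. 0 \<le> \<nu> i \<and> \<nu> i \<le> 1" "(\<Sum>i<d. \<nu> i) = fro_sq M"
    using contraction_gram_eigenbasis[OF M contr] by blast
  have spec: "\<forall>i<d. 0 \<le> \<sigma> i" "char_poly (transpose_mat M * M) = (\<Prod>i<d. [:- ((\<sigma> i)\<^sup>2), 1:])"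
    using singular_values_spec[OF M w(1)] w(2,3) unfolding \<sigma>_def by auto
  have "char_poly (transpose_mat M * M) = prod_list (map (\<lambda>x. [:-x, 1:]) (map \<nu> [0..<d]))"
    by (rule char_poly_eigenbasis[OF w(1)], insert M w(2), auto)
  then have ms: "mset (map (\<lambda>i. (\<sigma> i)\<^sup>2) [0..<d]) = mset (map \<nu> [0..<d])"
    using spec(2) linear_factors_mset_eq unfolding prod_linear_factors_upt by metis
  have "(\<sigma> i)\<^sup>2 \<le> 1" if "i < d" for i
  proof -
    have "(\<sigma> i)\<^sup>2 \<in> set (map (\<lambda>i. (\<sigma> i)\<^sup>2) [0..<d])" using that by auto
    then have "(\<sigma> i)\<^sup>2 \<in> set (map \<nu> [0..<d])" using ms by (metis set_mset_mset)
    then show ?thesis using w(3) by auto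
  qed
  then show "\<forall>i<d. 0 \<le> \<sigma> i \<and> \<sigma> i \<le> 1" using spec(1) power2_le_imp_le[of _ 1] by auto
  have sum_upt: "(\<Sum>i<d. f i) = sum_list (map f [0..<d])" for f :: "nat \<Rightarrow> real"
    by (subst sum.distinct_set_conv_list[symmetric], auto simp: atLeast0LessThan)
  have "(\<Sum>i<d. (\<sigma> i)\<^sup>2) = (\<Sum>i<d. \<nu> i)"
    unfolding sum_upt by (metis ms sum_mset_sum_list)
  then show "(\<Sum>i<d. (\<sigma> i)\<^sup>2) = fro_sq M" using w(4) by simp
qed

text \<open>For the contraction \<open>Vh\<^sup>T V\<close> the singular values lie in \<open>[0,1]\<close>, so
  \<open>sin\<^sup>2 (arccos \<sigma>) = 1 - \<sigma>\<^sup>2\<close> and \<open>\<parallel>sin \<Theta>\<parallel>\<^sub>F\<^sup>2 = d - \<parallel>Vh\<^sup>T V\<parallel>\<^sub>F\<^sup>2\<close>.\<close>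
lemma fro_sq_sin_theta:
  assumes Vh: "(Vh::real mat) \<in> carrier_mat p d" and V: "(V::real mat) \<in> carrier_mat p d"
    and contr: "\<And>x. x \<in> carrier_vec d \<Longrightarrow>
      ((transpose_mat Vh * V) *\<^sub>v x) \<bullet> ((transpose_mat Vh * V) *\<^sub>v x) \<le> x \<bullet> x"
  shows "fro_sq (sin_theta Vh V) = real d - fro_sq (transpose_mat Vh * V)"
proof -
  define M where "M = transpose_mat Vh * V"
  have M: "M \<in> carrier_mat d d" unfolding M_def using Vh V by auto
  define \<sigma> where "\<sigma> = singular_values M"
  note sv = contraction_singular_values[OF M contr[folded M_def], folded \<sigma>_def]
  have sin_sq: "(sin (arccos (\<sigma> i)))\<^sup>2 = 1 - (\<sigma> i)\<^sup>2" if i: "i < d" for i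
  proof -
    have "0 \<le> \<sigma> i" "\<sigma> i \<le> 1" using sv(1) i by auto
    moreover have "(\<sigma> i)\<^sup>2 \<le> 1" using calculation by (simp add: power_le_one)
    ultimately show ?thesis by (simp add: sin_arccos)
  qed
  have "sin_theta Vh V = mat d d (\<lambda>(i,j). if i = j then sin (arccos (\<sigma> i)) else 0)"
    unfolding sin_theta_def Let_def M_def[symmetric] \<sigma>_def using M by auto
  then have "fro_sq (sin_theta Vh V) = (\<Sum>i<d. \<Sum>j<d. (if i = j then sin (arccos (\<sigma> i)) else 0)\<^sup>2)"
    unfolding fro_sq_def by (intro sum.cong refl, auto)
  also have "\<dots> = (\<Sum>i<d. (sin (arccos (\<sigma> i)))\<^sup>2)"
  proof (intro sum.cong refl)
    fix i assume "i \<in> {..<d}"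
    have "(\<Sum>j<d. (if i = j then sin (arccos (\<sigma> i)) else 0)\<^sup>2)
        = (\<Sum>j<d. if j = i then (sin (arccos (\<sigma> i)))\<^sup>2 else 0)"
      by (intro sum.cong) auto
    then show "(\<Sum>j<d. (if i = j then sin (arccos (\<sigma> i)) else 0)\<^sup>2) = (sin (arccos (\<sigma> i)))\<^sup>2"
      using \<open>i \<in> {..<d}\<close> by simp
  qed
  also have "\<dots> = (\<Sum>i<d. 1 - (\<sigma> i)\<^sup>2)" using sin_sq by simp
  also have "\<dots> = real d - fro_sq M" using sv(2) by (simp add: sum_subtractf)
  finally show ?thesis unfolding M_def .
qed

text \<open>Left singular vectors: if the images \<open>M w\<^sub>i\<close> of an orthonormal basis are orthogonal with
  squared lengths \<open>\<nu>\<^sub>i\<close>, then \<open>M w\<^sub>i = \<surd>\<nu>\<^sub>i c\<^sub>i\<close> for some orthonormal basis \<open>c\<close> (normalise the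
  nonzero images and complete).\<close>
lemma left_singular_vectors:
  assumes M: "(M::real mat) \<in> carrier_mat d d"
    and nu0: "\<And>i. i < d \<Longrightarrow> 0 \<le> \<nu> i"
    and images: "\<And>i k. i < d \<Longrightarrow> k < d \<Longrightarrow> (M *\<^sub>v w i) \<bullet> (M *\<^sub>v w k) = (if i = k then \<nu> i else 0)"
  shows "\<exists>c. orthonormal_family d {..<d} c \<and> (\<forall>i<d. M *\<^sub>v w i = sqrt (\<nu> i) \<cdot>\<^sub>v c i)"
proof -
  define J where "J = {i. i < d \<and> 0 < \<nu> i}"
  define c where "c = (\<lambda>i. (1 / sqrt (\<nu> i)) \<cdot>\<^sub>v (M *\<^sub>v w i))"
  have Mw: "\<And>i. M *\<^sub>v w i \<in> carrier_vec d" using M by auto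
  have "orthonormal_family d J c" unfolding orthonormal_family_def
  proof (intro conjI ballI)
    fix i assume "i \<in> J" then show "c i \<in> carrier_vec d" unfolding c_def using M by auto
  next
    fix i k assume ik: "i \<in> J" "k \<in> J"
    have "c i \<bullet> c k = (1 / sqrt (\<nu> i)) * ((1 / sqrt (\<nu> k)) * ((M *\<^sub>v w i) \<bullet> (M *\<^sub>v w k)))"
      unfolding c_def using Mw[of i] Mw[of k]
      by (simp add: smult_scalar_prod_distrib[of _ d] scalar_prod_smult_distrib[of _ d])
    also have "\<dots> = (if i = k then 1 else 0)" using images ik unfolding J_def
      by (auto simp: field_simps)
    finally show "c i \<bullet> c k = (if i = k then 1 else 0)" .
  qed
  then obtain c' where c': "orthonormal_family d {..<d} c'" "\<forall>i\<in>J. c' i = c i"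
    using orthonormal_family_extend unfolding J_def by blast
  have "M *\<^sub>v w i = sqrt (\<nu> i) \<cdot>\<^sub>v c' i" if i: "i < d" for i
  proof (cases "0 < \<nu> i")
    case True
    then have "c' i = c i" using c'(2) i unfolding J_def by auto
    then show ?thesis unfolding c_def using True by (simp add: smult_smult_assoc)
  next
    case False
    then have "\<nu> i = 0" using nu0[OF i] by simp
    then have "M *\<^sub>v w i = 0\<^sub>v d" using images[OF i i] dot_self_pos[OF Mw] by fastforce
    then show ?thesis using \<open>\<nu> i = 0\<close> orthonormal_familyD(1)[OF c'(1), of i] i by auto
  qed
  then show ?thesis using c'(1) by blast
qed

lemma outer_sum_orthogonal:
  assumes c: "orthonormal_family d {..<d} c" and w: "orthonormal_family d {..<d} w"
  defines "Q \<equiv> mat d d (\<lambda>(a,b). \<Sum>i<d. c i $ a * w i $ b)"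
  shows "transpose_mat Q * Q = 1\<^sub>m d"
proof (rule eq_matI)
  fix b b' assume "b < dim_row (1\<^sub>m d :: real mat)" "b' < dim_col (1\<^sub>m d :: real mat)"
  then have bb': "b < d" "b' < d" by auto
  have cc: "\<And>k. k < d \<Longrightarrow> c k \<in> carrier_vec d" using c orthonormal_familyD by blast
  have "(transpose_mat Q * Q) $$ (b,b') = (\<Sum>a<d. (\<Sum>i<d. c i $ a * w i $ b) * (\<Sum>k<d. c k $ a * w k $ b'))"
    using bb' unfolding Q_def by (simp add: scalar_prod_def atLeast0LessThan)
  also have "\<dots> = (\<Sum>a<d. \<Sum>i<d. \<Sum>k<d. (c i $ a * w i $ b) * (c k $ a * w k $ b'))"
    by (simp only: sum_product)
  also have "\<dots> = (\<Sum>i<d. \<Sum>k<d. \<Sum>a<d. (c i $ a * w i $ b) * (c k $ a * w k $ b'))"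
    by (subst sum.swap, rule sum.cong[OF refl], rule sum.swap)
  also have "\<dots> = (\<Sum>i<d. \<Sum>k<d. w i $ b * w k $ b' * (c i \<bullet> c k))"
  proof (intro sum.cong refl)
    fix i k assume "k \<in> {..<d}"
    then show "(\<Sum>a<d. (c i $ a * w i $ b) * (c k $ a * w k $ b')) = w i $ b * w k $ b' * (c i \<bullet> c k)"
      using dot_as_sum[OF cc[of k]] by (simp add: sum_distrib_left ac_simps)
  qed
  also have "\<dots> = (\<Sum>i<d. w i $ b * w i $ b')"
  proof (intro sum.cong refl)
    fix i assume i: "i \<in> {..<d}"
    have "(\<Sum>k<d. w i $ b * w k $ b' * (c i \<bullet> c k)) = (\<Sum>k<d. if k = i then w i $ b * w i $ b' else 0)"
      by (intro sum.cong refl, insert orthonormal_familyD(2)[OF c] i, auto)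
    then show "(\<Sum>k<d. w i $ b * w k $ b' * (c i \<bullet> c k)) = w i $ b * w i $ b'" using i by simp
  qed
  also have "\<dots> = 1\<^sub>m d $$ (b,b')" using orthonormal_basis_dual[OF w bb'] bb' by simp
  finally show "(transpose_mat Q * Q) $$ (b,b') = 1\<^sub>m d $$ (b,b')" .
qed (auto simp: Q_def)

lemma outer_sum_pairing:
  assumes M: "(M::real mat) \<in> carrier_mat d d" and w: "\<And>i. i < d \<Longrightarrow> w i \<in> carrier_vec d"
  shows "(\<Sum>a<d. \<Sum>b<d. (\<Sum>i<d. c i $ a * w i $ b) * M $$ (a,b)) = (\<Sum>i<d. c i \<bullet> (M *\<^sub>v w i))"
proof -
  have "c i \<bullet> (M *\<^sub>v w i) = (\<Sum>a<d. \<Sum>b<d. c i $ a * w i $ b * M $$ (a,b))" if i: "i < d" for i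
  proof -
    have "c i \<bullet> (M *\<^sub>v w i) = (\<Sum>a<d. c i $ a * (\<Sum>b<d. M $$ (a,b) * w i $ b))"
      using M w[OF i] by (subst dot_as_sum[of _ d]) (auto simp: scalar_prod_def atLeast0LessThan)
    then show ?thesis by (simp add: sum_distrib_left ac_simps)
  qed
  then have "(\<Sum>i<d. c i \<bullet> (M *\<^sub>v w i)) = (\<Sum>i<d. \<Sum>a<d. \<Sum>b<d. c i $ a * w i $ b * M $$ (a,b))"
    by simp
  also have "\<dots> = (\<Sum>a<d. \<Sum>b<d. \<Sum>i<d. c i $ a * w i $ b * M $$ (a,b))"
    by (subst sum.swap, rule sum.cong[OF refl], rule sum.swap)
  finally show ?thesis by (simp add: sum_distrib_right)
qed

text \<open>With
  \<open>Q = \<Sum>\<^sub>i c\<^sub>i w\<^sub>i\<^sup>T\<close> built from singular vectors, \<open>\<langle>Q, M\<rangle> = \<Sum>\<^sub>i \<surd>\<nu>\<^sub>i \<ge> \<Sum>\<^sub>i \<nu>\<^sub>i\<close> as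
  \<open>\<nu>\<^sub>i \<in> [0,1]\<close>.\<close>
lemma polar_factor:
  assumes M: "(M::real mat) \<in> carrier_mat d d"
    and contr: "\<And>x. x \<in> carrier_vec d \<Longrightarrow> (M *\<^sub>v x) \<bullet> (M *\<^sub>v x) \<le> x \<bullet> x"
  shows "\<exists>Q \<in> carrier_mat d d. transpose_mat Q * Q = 1\<^sub>m d \<and>
           fro_sq M \<le> (\<Sum>a<d. \<Sum>b<d. Q $$ (a,b) * M $$ (a,b))"
proof -
  obtain w \<nu> where w: "orthonormal_family d {..<d} w" "\<forall>i<d. 0 \<le> \<nu> i \<and> \<nu> i \<le> 1"
    "\<forall>i<d. \<forall>k<d. (M *\<^sub>v w i) \<bullet> (M *\<^sub>v w k) = (if i = k then \<nu> i else 0)"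
    "(\<Sum>i<d. \<nu> i) = fro_sq M"
    using contraction_gram_eigenbasis[OF M contr] by blast
  obtain c where c: "orthonormal_family d {..<d} c" "\<forall>i<d. M *\<^sub>v w i = sqrt (\<nu> i) \<cdot>\<^sub>v c i"
    using left_singular_vectors[OF M, of \<nu> w] w(2,3) by auto
  define Q where "Q = mat d d (\<lambda>(a,b). \<Sum>i<d. c i $ a * w i $ b)"
  have wc: "\<And>i. i < d \<Longrightarrow> w i \<in> carrier_vec d" using w(1) orthonormal_familyD by blast
  have cc: "\<And>i. i < d \<Longrightarrow> c i \<in> carrier_vec d" using c(1) orthonormal_familyD by blast
  have "\<nu> i \<le> sqrt (\<nu> i)" if "i < d" for i
  proof -
    have \<nu>: "0 \<le> \<nu> i" "\<nu> i \<le> 1" using w(2) that by auto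
    then have "\<nu> i = sqrt (\<nu> i) * sqrt (\<nu> i)" by simp
    also have "\<dots> \<le> sqrt (\<nu> i) * 1" using \<nu> by (intro mult_left_mono) auto
    finally show ?thesis by simp
  qed
  then have "fro_sq M \<le> (\<Sum>i<d. sqrt (\<nu> i))"
    unfolding w(4)[symmetric] by (intro sum_mono) auto
  also have "\<dots> = (\<Sum>i<d. c i \<bullet> (M *\<^sub>v w i))"
    using c orthonormal_familyD(2)[OF c(1)] cc by (intro sum.cong refl) (simp add: scalar_prod_smult_distrib[of _ d])
  also have "\<dots> = (\<Sum>a<d. \<Sum>b<d. (\<Sum>i<d. c i $ a * w i $ b) * M $$ (a,b))"
    by (rule outer_sum_pairing[OF M wc, symmetric])
  also have "\<dots> = (\<Sum>a<d. \<Sum>b<d. Q $$ (a,b) * M $$ (a,b))"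
    unfolding Q_def by (intro sum.cong refl) auto
  finally show ?thesis using outer_sum_orthogonal[OF c(1) w(1)] unfolding Q_def[symmetric]
    by (auto simp: Q_def)
qed

lemma procrustes_identity:
  assumes V: "(V::real mat) \<in> carrier_mat p d" and on: "orthonormal_cols V"
    and Vh: "(Vh::real mat) \<in> carrier_mat p d" and onh: "orthonormal_cols Vh"
    and Q: "Q \<in> carrier_mat d d" and QQ: "transpose_mat Q * Q = 1\<^sub>m d"
  shows "fro_sq (Vh * Q - V) = 2 * real d - 2 * (\<Sum>a<d. \<Sum>b<d. Q $$ (a,b) * (transpose_mat Vh * V) $$ (a,b))"
proof -
  define M where "M = transpose_mat Vh * V"
  have column: "col (Vh * Q - V) b \<bullet> col (Vh * Q - V) b = 2 - 2 * (\<Sum>a<d. Q $$ (a,b) * M $$ (a,b))"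
    if b: "b < d" for b
  proof -
    define y where "y = col Q b"
    define v where "v = col V b"
    define x where "x = Vh *\<^sub>v y"
    have y: "y \<in> carrier_vec d" unfolding y_def using Q by auto
    have v: "v \<in> carrier_vec p" unfolding v_def using V b by auto
    have x: "x \<in> carrier_vec p" unfolding x_def using Vh by auto
    have "col (Vh * Q - V) b = x - v" unfolding x_def y_def v_def using Vh Q V b by auto
    moreover have "y \<bullet> y = 1"
    proof -
      have "(transpose_mat Q * Q) $$ (b,b) = col Q b \<bullet> col Q b" using Q b by auto
      then show ?thesis using QQ b unfolding y_def by auto
    qed
    then have "x \<bullet> x = 1" unfolding x_def using orthonormal_cols_isometry[OF Vh onh y] by simp
    moreover have "v \<bullet> v = 1"
      unfolding v_def using orthonormal_familyD(2)[OF orthonormal_cols_family[OF V on], of b b] b by auto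
    moreover have "x \<bullet> v = (\<Sum>a<d. Q $$ (a,b) * M $$ (a,b))"
    proof -
      have "x \<bullet> v = (transpose_mat Vh *\<^sub>v v) \<bullet> y" unfolding x_def
        using comm_scalar_prod[OF x v] transpose_vec_mult_scalar[OF Vh y v] x_def by simp
      also have "\<dots> = (\<Sum>a<d. (transpose_mat Vh *\<^sub>v v) $ a * y $ a)" by (rule dot_as_sum[OF y])
      also have "\<dots> = (\<Sum>a<d. Q $$ (a,b) * M $$ (a,b))"
        unfolding M_def y_def v_def using Vh V Q b by (intro sum.cong refl, auto)
      finally show ?thesis .
    qed
    ultimately show ?thesis using dot_diff_self[OF x v] by simp
  qed
  have "Vh * Q - V \<in> carrier_mat p d" using Vh Q V by auto
  then have "fro_sq (Vh * Q - V) = (\<Sum>b<d. 2 - 2 * (\<Sum>a<d. Q $$ (a,b) * M $$ (a,b)))"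
    using fro_sq_cols column by simp
  also have "\<dots> = 2 * real d - 2 * (\<Sum>b<d. \<Sum>a<d. Q $$ (a,b) * M $$ (a,b))"
    by (simp add: sum_subtractf sum_distrib_left)
  also have "(\<Sum>b<d. \<Sum>a<d. Q $$ (a,b) * M $$ (a,b)) = (\<Sum>a<d. \<Sum>b<d. Q $$ (a,b) * M $$ (a,b))"
    by (rule sum.swap)
  finally show ?thesis unfolding M_def .
qed

lemma procrustes_sin_theta:
  assumes V: "(V::real mat) \<in> carrier_mat p d" and on: "orthonormal_cols V"
    and Vh: "(Vh::real mat) \<in> carrier_mat p d" and onh: "orthonormal_cols Vh" and dp: "d \<le> p"
  shows "\<exists>Q \<in> carrier_mat d d. transpose_mat Q * Q = 1\<^sub>m d \<and>
           fro_sq (Vh * Q - V) \<le> 2 * fro_sq (sin_theta Vh V)"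
proof -
  have M: "transpose_mat Vh * V \<in> carrier_mat d d" using V Vh by auto
  note contr = cross_gram_contraction[OF V on Vh onh _ dp]
  obtain Q where Q: "Q \<in> carrier_mat d d" "transpose_mat Q * Q = 1\<^sub>m d"
    "fro_sq (transpose_mat Vh * V) \<le> (\<Sum>a<d. \<Sum>b<d. Q $$ (a,b) * (transpose_mat Vh * V) $$ (a,b))"
    using polar_factor[OF M contr] by blast
  then have "fro_sq (Vh * Q - V) \<le> 2 * fro_sq (sin_theta Vh V)"
    using procrustes_identity[OF V on Vh onh Q(1,2)] fro_sq_sin_theta[OF Vh V contr] by simp
  then show ?thesis using Q(1,2) by blast
qed

lemma eigenvectors_orthogonal:
  assumes A: "(A::real mat) \<in> carrier_mat n n" and s: "transpose_mat A = A"
    and x: "x \<in> carrier_vec n" and y: "y \<in> carrier_vec n"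
    and ex: "A *\<^sub>v x = a \<cdot>\<^sub>v x" and ey: "A *\<^sub>v y = b \<cdot>\<^sub>v y" and ab: "a \<noteq> b"
  shows "x \<bullet> y = 0"
proof -
  have "a * (x \<bullet> y) = (A *\<^sub>v x) \<bullet> y" using ex x y by simp
  also have "\<dots> = x \<bullet> (A *\<^sub>v y)" by (rule symmetric_dot[OF A s x y])
  also have "\<dots> = b * (x \<bullet> y)" using ey x y by simp
  finally show ?thesis using ab by simp
qed

text \<open>Enumeration \<open>t \<mapsto> outer_index r d t\<close>, \<open>t < p - d\<close>, of the (0-based) indices outside the
  block \<open>{r-1, \<dots>, r+d-2}\<close>, i.e. of the eigenvalues \<open>lam k\<close> with \<open>k \<notin> {r..r+d-1}\<close>.\<close>
definition outer_index :: "nat \<Rightarrow> nat \<Rightarrow> nat \<Rightarrow> nat" where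
  "outer_index r d t = (if t < r - 1 then t else t + d)"

lemma outer_index_lt: "r + d \<le> p + 1 \<Longrightarrow> 1 \<le> r \<Longrightarrow> t < p - d \<Longrightarrow> outer_index r d t < p"
  unfolding outer_index_def by auto

lemma outer_index_inj: "outer_index r d t = outer_index r d t' \<longleftrightarrow> t = t'"
  unfolding outer_index_def by auto

lemma outer_eigenvectors_family:
  assumes u: "orthonormal_family p {..<p} u" and r: "1 \<le> r" "r + d \<le> p + 1"
  shows "orthonormal_family p {..<p - d} (\<lambda>t. u (outer_index r d t))"
  using orthonormal_familyD[OF u] outer_index_lt[OF r(2) r(1)] outer_index_inj
  unfolding orthonormal_family_def by auto

text \<open>If the block eigenvalues \<open>lam (r + j)\<close> differ from the outer ones, the columns of \<open>V\<close>
  together with the outer eigenvectors of \<open>\<Sigma>\<close> form an orthonormal basis; Parseval's identity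
  in this basis splits \<open>\<parallel>x\<parallel>\<^sup>2\<close> into a block part and an outer part.\<close>
lemma block_outer_parseval:
  assumes S: "(Sg::real mat) \<in> carrier_mat p p" and sS: "transpose_mat Sg = Sg"
    and V: "(V::real mat) \<in> carrier_mat p d" and on: "orthonormal_cols V"
    and Veig: "\<And>j. j < d \<Longrightarrow> Sg *\<^sub>v col V j = lam (j + r) \<cdot>\<^sub>v col V j"
    and u: "orthonormal_family p {..<p} u" and eu: "\<And>k. k < p \<Longrightarrow> Sg *\<^sub>v u k = lam (Suc k) \<cdot>\<^sub>v u k"
    and r: "1 \<le> r" "r + d \<le> p + 1"
    and sep: "\<And>t j. t < p - d \<Longrightarrow> j < d \<Longrightarrow> lam (outer_index r d t + 1) \<noteq> lam (j + r)"
    and x: "x \<in> carrier_vec p"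
  shows "x \<bullet> x = (\<Sum>l<d. (col V l \<bullet> x)\<^sup>2) + (\<Sum>t<p - d. (u (outer_index r d t) \<bullet> x)\<^sup>2)"
proof -
  have dp: "d \<le> p" using r by auto
  have uc: "\<And>k. k < p \<Longrightarrow> u k \<in> carrier_vec p" using u orthonormal_familyD by blast
  have vc: "\<And>k. k < d \<Longrightarrow> col V k \<in> carrier_vec p" using V by auto
  note outer_lt = outer_index_lt[OF r(2) r(1)]
  have vu: "col V j \<bullet> u (outer_index r d t) = 0" "u (outer_index r d t) \<bullet> col V j = 0"
    if jt: "j < d" "t < p - d" for j t
  proof -
    show "col V j \<bullet> u (outer_index r d t) = 0"
      by (rule eigenvectors_orthogonal[OF S sS vc[OF jt(1)] uc[OF outer_lt] Veig[OF jt(1)] eu[OF outer_lt]],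
          insert sep[OF jt(2) jt(1)] jt, auto)
    then show "u (outer_index r d t) \<bullet> col V j = 0"
      using comm_scalar_prod[OF vc[OF jt(1)] uc[OF outer_lt[OF jt(2)]]] by simp
  qed
  define q where "q t = (if t < d then col V t else u (outer_index r d (t - d)))" for t
  have "orthonormal_family p {..<p} q" unfolding orthonormal_family_def
  proof (intro conjI ballI)
    fix i assume "i \<in> {..<p}"
    then show "q i \<in> carrier_vec p" using vc uc outer_lt[of "i - d"] dp unfolding q_def by auto
  next
    fix i k assume "i \<in> {..<p}" "k \<in> {..<p}"
    then show "q i \<bullet> q k = (if i = k then 1 else 0)"
      using orthonormal_familyD(2)[OF orthonormal_cols_family[OF V on], of i k]
        orthonormal_familyD(2)[OF outer_eigenvectors_family[OF u r], of "i - d" "k - d"]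
        vu[of i "k - d"] vu[of k "i - d"] dp unfolding q_def by auto
  qed
  then have "x \<bullet> x = (\<Sum>t<d + (p - d). (q t \<bullet> x)\<^sup>2)" using parseval_norm[OF _ x] dp by simp
  also have "\<dots> = (\<Sum>t<d. (q t \<bullet> x)\<^sup>2) + (\<Sum>t<p - d. (q (d + t) \<bullet> x)\<^sup>2)"
  proof -
    have "(\<Sum>t<d + n. f t) = (\<Sum>t<d. f t) + (\<Sum>t<n. f (d + t))" for n and f :: "nat \<Rightarrow> real"
      by (induction n) auto
    then show ?thesis .
  qed
  finally show ?thesis unfolding q_def by simp
qed

text \<open>\<open>\<parallel>sin \<Theta>(Vh, V)\<parallel>\<^sub>F\<^sup>2\<close> is the outer mass of \<open>Vh\<close>: sum the split of \<open>\<parallel>vh\<^sub>j\<parallel>\<^sup>2 = 1\<close> over the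
  columns and compare with \<open>\<parallel>sin \<Theta>\<parallel>\<^sub>F\<^sup>2 = d - \<parallel>Vh\<^sup>T V\<parallel>\<^sub>F\<^sup>2\<close>.\<close>
lemma sin_theta_outer_mass:
  assumes S: "(Sg::real mat) \<in> carrier_mat p p" and sS: "transpose_mat Sg = Sg"
    and V: "(V::real mat) \<in> carrier_mat p d" and on: "orthonormal_cols V"
    and Vh: "(Vh::real mat) \<in> carrier_mat p d" and onh: "orthonormal_cols Vh"
    and Veig: "\<And>j. j < d \<Longrightarrow> Sg *\<^sub>v col V j = lam (j + r) \<cdot>\<^sub>v col V j"
    and u: "orthonormal_family p {..<p} u" and eu: "\<And>k. k < p \<Longrightarrow> Sg *\<^sub>v u k = lam (Suc k) \<cdot>\<^sub>v u k"
    and r: "1 \<le> r" "r + d \<le> p + 1"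
    and sep: "\<And>t j. t < p - d \<Longrightarrow> j < d \<Longrightarrow> lam (outer_index r d t + 1) \<noteq> lam (j + r)"
  shows "fro_sq (sin_theta Vh V) = (\<Sum>j<d. \<Sum>t<p - d. (u (outer_index r d t) \<bullet> col Vh j)\<^sup>2)"
proof -
  have dp: "d \<le> p" using r by auto
  have "fro_sq (transpose_mat Vh * V) = (\<Sum>j<d. \<Sum>l<d. (col V l \<bullet> col Vh j)\<^sup>2)"
    unfolding fro_sq_def using V Vh
    by (intro sum.cong refl) (auto simp: comm_scalar_prod[of "col Vh _" p "col V _"])
  moreover have "(\<Sum>l<d. (col V l \<bullet> col Vh j)\<^sup>2) + (\<Sum>t<p - d. (u (outer_index r d t) \<bullet> col Vh j)\<^sup>2) = 1"
    if j: "j < d" for j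
    using block_outer_parseval[OF S sS V on Veig u eu r sep, of "col Vh j"] Vh j
      orthonormal_familyD(2)[OF orthonormal_cols_family[OF Vh onh], of j j] by auto
  ultimately have "real d = fro_sq (transpose_mat Vh * V) + (\<Sum>j<d. \<Sum>t<p - d. (u (outer_index r d t) \<bullet> col Vh j)\<^sup>2)"
    by (simp add: sum.distrib[symmetric])
  then show ?thesis
    using fro_sq_sin_theta[OF Vh V cross_gram_contraction[OF V on Vh onh _ dp]] by simp
qed

text \<open>Outer coefficients of an eigenvector of a perturbation: if \<open>\<Sigma>h x = \<kappa>h x\<close> with \<open>\<parallel>x\<parallel> = 1\<close>
  and the eigenvalues \<open>\<mu>\<^sub>k\<close> of an orthonormal family of eigenvectors \<open>u\<^sub>k\<close> of \<open>\<Sigma>\<close> are at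
  distance at least \<open>g\<close> from \<open>\<kappa>\<close>, then \<open>g\<^sup>2 \<Sum>\<^sub>k (u\<^sub>k \<bullet> x)\<^sup>2 \<le> 2 \<parallel>E x\<parallel>\<^sup>2 + 2 (\<kappa>h - \<kappa>)\<^sup>2\<close>
  for \<open>E = \<Sigma>h - \<Sigma>\<close>: the coefficients of \<open>(\<Sigma> - \<kappa>) x = (\<kappa>h - \<kappa>) x - E x\<close> are
  \<open>(\<mu>\<^sub>k - \<kappa>) (u\<^sub>k \<bullet> x)\<close>; apply Bessel.\<close>
lemma eigengap_coefficients_bound:
  assumes S: "(Sg::real mat) \<in> carrier_mat p p" and sS: "transpose_mat Sg = Sg"
    and Sh: "(Sgh::real mat) \<in> carrier_mat p p"
    and u: "orthonormal_family p J u" and J: "J \<subseteq> {..<p}"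
    and eu: "\<And>k. k \<in> J \<Longrightarrow> Sg *\<^sub>v u k = \<mu> k \<cdot>\<^sub>v u k"
    and x: "x \<in> carrier_vec p" "x \<bullet> x = 1" and ex: "Sgh *\<^sub>v x = \<kappa>h \<cdot>\<^sub>v x"
    and gap: "\<And>k. k \<in> J \<Longrightarrow> g \<le> \<bar>\<mu> k - \<kappa>\<bar>" and g: "0 \<le> g"
  shows "g\<^sup>2 * (\<Sum>k\<in>J. (u k \<bullet> x)\<^sup>2) \<le> 2 * (((Sgh - Sg) *\<^sub>v x) \<bullet> ((Sgh - Sg) *\<^sub>v x)) + 2 * (\<kappa>h - \<kappa>)\<^sup>2"
proof -
  have uc: "\<And>k. k \<in> J \<Longrightarrow> u k \<in> carrier_vec p" using u orthonormal_familyD by blast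
  define z where "z = Sg *\<^sub>v x - \<kappa> \<cdot>\<^sub>v x"
  have z: "z \<in> carrier_vec p" unfolding z_def using S x by auto
  have "u k \<bullet> z = (\<mu> k - \<kappa>) * (u k \<bullet> x)" if k: "k \<in> J" for k
  proof -
    have "u k \<bullet> z = (Sg *\<^sub>v u k) \<bullet> x - \<kappa> * (u k \<bullet> x)"
      unfolding z_def using uc[OF k] S x symmetric_dot[OF S sS uc[OF k] x(1)]
      by (simp add: scalar_prod_minus_distrib[of _ p])
    then show ?thesis using eu[OF k] uc[OF k] x by (simp add: algebra_simps)
  qed
  then have "g\<^sup>2 * (\<Sum>k\<in>J. (u k \<bullet> x)\<^sup>2) \<le> (\<Sum>k\<in>J. (u k \<bullet> z)\<^sup>2)"
    using gap g unfolding sum_distrib_left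
    by (intro sum_mono) (auto simp: power_mult_distrib intro!: mult_right_mono power_mono
        abs_le_square_iff[THEN iffD1])
  also have "\<dots> \<le> z \<bullet> z" by (rule bessel[OF u J z])
  also have "z = (\<kappa>h - \<kappa>) \<cdot>\<^sub>v x - (Sgh - Sg) *\<^sub>v x"
  proof (rule eq_vecI)
    fix i assume "i < dim_vec ((\<kappa>h - \<kappa>) \<cdot>\<^sub>v x - (Sgh - Sg) *\<^sub>v x)"
    then have i: "i < p" using S by simp
    have "(Sgh *\<^sub>v x) $ i = \<kappa>h * x $ i" using arg_cong[OF ex, of "\<lambda>v. v $ i"] i x by simp
    then show "z $ i = ((\<kappa>h - \<kappa>) \<cdot>\<^sub>v x - (Sgh - Sg) *\<^sub>v x) $ i"
      unfolding z_def using S Sh x i by (simp add: minus_mult_distrib_mat_vec algebra_simps)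
  qed (insert S Sh x, auto simp: z_def)
  also have "\<dots> \<bullet> \<dots> \<le> 2 * (((\<kappa>h - \<kappa>) \<cdot>\<^sub>v x) \<bullet> ((\<kappa>h - \<kappa>) \<cdot>\<^sub>v x))
      + 2 * (((Sgh - Sg) *\<^sub>v x) \<bullet> ((Sgh - Sg) *\<^sub>v x))"
    by (rule dot_diff_le[of _ p], insert x Sh S, auto intro!: mult_mat_vec_in_carrier[of _ p p])
  also have "((\<kappa>h - \<kappa>) \<cdot>\<^sub>v x) \<bullet> ((\<kappa>h - \<kappa>) \<cdot>\<^sub>v x) = (\<kappa>h - \<kappa>)\<^sup>2"
    using x by (simp add: power2_eq_square)
  finally show ?thesis by simp
qed

lemma orthonormal_image_mass_bound:
  assumes E: "(E::real mat) \<in> carrier_mat m p"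
    and Vh: "(Vh::real mat) \<in> carrier_mat p d" and onh: "orthonormal_cols Vh" and dp: "d \<le> p"
  shows "(\<Sum>j<d. (E *\<^sub>v col Vh j) \<bullet> (E *\<^sub>v col Vh j)) \<le> min (real d * (op_norm E)\<^sup>2) (fro_sq E)"
proof -
  note vh = orthonormal_cols_family[OF Vh onh]
  have "(E *\<^sub>v col Vh j) \<bullet> (E *\<^sub>v col Vh j) \<le> (op_norm E)\<^sup>2" if j: "j < d" for j
  proof -
    have "vnorm (col Vh j) = 1"
      using orthonormal_familyD(2)[OF vh, of j j] j unfolding vnorm_def by auto
    then have "vnorm (E *\<^sub>v col Vh j) \<le> op_norm E"
      using op_norm_bound[OF E, of "col Vh j"] Vh j by auto
    then have "(vnorm (E *\<^sub>v col Vh j))\<^sup>2 \<le> (op_norm E)\<^sup>2" by (rule power_mono[OF _ vnorm_nonneg])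
    then show ?thesis by (simp add: vnorm_sq)
  qed
  then have "(\<Sum>j<d. (E *\<^sub>v col Vh j) \<bullet> (E *\<^sub>v col Vh j)) \<le> real d * (op_norm E)\<^sup>2"
    using sum_mono[of "{..<d}" "\<lambda>j. (E *\<^sub>v col Vh j) \<bullet> (E *\<^sub>v col Vh j)" "\<lambda>_. (op_norm E)\<^sup>2"] by simp
  moreover have "(\<Sum>j<d. (E *\<^sub>v col Vh j) \<bullet> (E *\<^sub>v col Vh j)) \<le> fro_sq E"
    by (rule fro_sq_bessel[OF E vh], insert dp, auto)
  ultimately show ?thesis by simp
qed

text \<open>The eigenvalues \<open>lam r, \<dots>, lam (r + d - 1)\<close> of a block move, in \<open>\<ell>\<^sup>2\<close>, by at most
  \<open>\<surd>d \<parallel>E\<parallel>\<^sub>o\<^sub>p\<close> (Weyl) and by at most \<open>\<parallel>E\<parallel>\<^sub>F\<close> (Hoffman-Wielandt).\<close>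
lemma eigenvalue_block_bound:
  assumes A: "(A::real mat) \<in> carrier_mat p p" and sA: "transpose_mat A = A"
    and B: "(B::real mat) \<in> carrier_mat p p" and sB: "transpose_mat B = B"
    and u: "orthonormal_family p {..<p} u" and eu: "\<And>k. k < p \<Longrightarrow> A *\<^sub>v u k = lam (Suc k) \<cdot>\<^sub>v u k"
    and w: "orthonormal_family p {..<p} w" and ew: "\<And>k. k < p \<Longrightarrow> B *\<^sub>v w k = lamh (Suc k) \<cdot>\<^sub>v w k"
    and ls: "\<And>i j. 1 \<le> i \<Longrightarrow> i \<le> j \<Longrightarrow> j \<le> p \<Longrightarrow> lam j \<le> lam i"
    and lhs: "\<And>i j. 1 \<le> i \<Longrightarrow> i \<le> j \<Longrightarrow> j \<le> p \<Longrightarrow> lamh j \<le> lamh i"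
    and r: "1 \<le> r" "r + d \<le> p + 1"
  shows "(\<Sum>j<d. (lamh (j + r) - lam (j + r))\<^sup>2) \<le> min (real d * (op_norm (B - A))\<^sup>2) (fro_sq (B - A))"
proof -
  have sa: "\<And>i j. i \<le> j \<Longrightarrow> j < p \<Longrightarrow> lam (Suc j) \<le> lam (Suc i)" using ls by auto
  have sb: "\<And>i j. i \<le> j \<Longrightarrow> j < p \<Longrightarrow> lamh (Suc j) \<le> lamh (Suc i)" using lhs by auto
  let ?f = "\<lambda>k. (lamh (Suc k) - lam (Suc k))\<^sup>2"
  have shift: "(\<Sum>j<d. (lamh (j + r) - lam (j + r))\<^sup>2) = (\<Sum>k\<in>(\<lambda>j. j + (r - 1)) ` {..<d}. ?f k)"
    using r by (subst sum.reindex) (auto simp: inj_on_def Suc_diff_le)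
  have weyl_sq: "?f k \<le> (op_norm (B - A))\<^sup>2" if "k < p" for k
    using weyl[OF A sA B sB u eu w ew sa sb that] by (metis abs_ge_zero power2_abs power_mono)
  have "(lamh (j + r) - lam (j + r))\<^sup>2 \<le> (op_norm (B - A))\<^sup>2" if "j < d" for j
  proof -
    have "j + r = Suc (j + (r - 1))" "j + (r - 1) < p" using that r by auto
    then show ?thesis using weyl_sq[of "j + (r - 1)"] by simp
  qed
  then have "(\<Sum>j<d. (lamh (j + r) - lam (j + r))\<^sup>2) \<le> real d * (op_norm (B - A))\<^sup>2"
    using sum_mono[of "{..<d}" _ "\<lambda>_. (op_norm (B - A))\<^sup>2"] by simp
  moreover have "(\<Sum>k\<in>(\<lambda>j. j + (r - 1)) ` {..<d}. ?f k) \<le> (\<Sum>k<p. ?f k)"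
    using r by (intro sum_mono2) auto
  moreover have "(\<Sum>k<p. ?f k) \<le> fro_sq (B - A)"
    by (rule hoffman_wielandt[OF A B sB u eu w ew sa sb])
  ultimately show ?thesis using shift by simp
qed

lemma davis_kahan_squared:
  assumes S: "(Sg::real mat) \<in> carrier_mat p p" and sS: "transpose_mat Sg = Sg"
    and Sh: "(Sgh::real mat) \<in> carrier_mat p p" and sSh: "transpose_mat Sgh = Sgh"
    and V: "(V::real mat) \<in> carrier_mat p d" and on: "orthonormal_cols V"
    and Vh: "(Vh::real mat) \<in> carrier_mat p d" and onh: "orthonormal_cols Vh"
    and Veig: "\<And>j. j < d \<Longrightarrow> Sg *\<^sub>v col V j = lam (j + r) \<cdot>\<^sub>v col V j"
    and Vheig: "\<And>j. j < d \<Longrightarrow> Sgh *\<^sub>v col Vh j = lamh (j + r) \<cdot>\<^sub>v col Vh j"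
    and u: "orthonormal_family p {..<p} u" and eu: "\<And>k. k < p \<Longrightarrow> Sg *\<^sub>v u k = lam (Suc k) \<cdot>\<^sub>v u k"
    and uh: "orthonormal_family p {..<p} uh" and euh: "\<And>k. k < p \<Longrightarrow> Sgh *\<^sub>v uh k = lamh (Suc k) \<cdot>\<^sub>v uh k"
    and ls: "\<And>i j. 1 \<le> i \<Longrightarrow> i \<le> j \<Longrightarrow> j \<le> p \<Longrightarrow> lam j \<le> lam i"
    and lhs: "\<And>i j. 1 \<le> i \<Longrightarrow> i \<le> j \<Longrightarrow> j \<le> p \<Longrightarrow> lamh j \<le> lamh i"
    and r: "1 \<le> r" "r + d \<le> p + 1"
    and sep: "\<And>t j. t < p - d \<Longrightarrow> j < d \<Longrightarrow> g \<le> \<bar>lam (outer_index r d t + 1) - lam (j + r)\<bar>"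
    and g: "0 < g"
  shows "g\<^sup>2 * fro_sq (sin_theta Vh V) \<le> 4 * min (real d * (op_norm (Sgh - Sg))\<^sup>2) (fro_sq (Sgh - Sg))"
proof -
  define E where "E = Sgh - Sg"
  have E: "E \<in> carrier_mat p p" unfolding E_def using S Sh by auto
  have dp: "d \<le> p" using r by auto
  have sep_ne: "\<And>t j. t < p - d \<Longrightarrow> j < d \<Longrightarrow> lam (outer_index r d t + 1) \<noteq> lam (j + r)"
    using sep g by fastforce
  note outer = outer_eigenvectors_family[OF u r]
  have column: "g\<^sup>2 * (\<Sum>t<p - d. (u (outer_index r d t) \<bullet> col Vh j)\<^sup>2)
      \<le> 2 * ((E *\<^sub>v col Vh j) \<bullet> (E *\<^sub>v col Vh j)) + 2 * (lamh (j + r) - lam (j + r))\<^sup>2" if j: "j < d" for j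
    unfolding E_def
    by (rule eigengap_coefficients_bound[OF S sS Sh outer _ _ _ _ Vheig[OF j] _ order.strict_implies_order[OF g]],
        insert eu outer_index_lt[OF r(2) r(1)] Vh j sep[of _ j] orthonormal_cols_family[OF Vh onh],
        auto simp: orthonormal_family_def)
  have "g\<^sup>2 * fro_sq (sin_theta Vh V) = (\<Sum>j<d. g\<^sup>2 * (\<Sum>t<p - d. (u (outer_index r d t) \<bullet> col Vh j)\<^sup>2))"
    using sin_theta_outer_mass[OF S sS V on Vh onh Veig u eu r sep_ne] by (simp add: sum_distrib_left)
  also have "\<dots> \<le> (\<Sum>j<d. 2 * ((E *\<^sub>v col Vh j) \<bullet> (E *\<^sub>v col Vh j)) + 2 * (lamh (j + r) - lam (j + r))\<^sup>2)"
    by (intro sum_mono column) auto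
  also have "\<dots> = 2 * (\<Sum>j<d. (E *\<^sub>v col Vh j) \<bullet> (E *\<^sub>v col Vh j)) + 2 * (\<Sum>j<d. (lamh (j + r) - lam (j + r))\<^sup>2)"
    by (simp add: sum.distrib sum_distrib_left)
  also have "\<dots> \<le> 4 * min (real d * (op_norm E)\<^sup>2) (fro_sq E)"
    using orthonormal_image_mass_bound[OF E Vh onh dp]
      eigenvalue_block_bound[OF S sS Sh sSh u eu uh euh ls lhs r, folded E_def] by (auto simp: min_def)
  finally show ?thesis unfolding E_def .
qed

lemma eigengap_separation:
  assumes ls: "\<And>i j. 1 \<le> i \<Longrightarrow> i \<le> j \<Longrightarrow> j \<le> p \<Longrightarrow> lam j \<le> lam i"
    and rs: "1 \<le> r" "r \<le> s" "s \<le> p" and gap: "eigengap lam p r s > 0"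
    and partial: "\<not> (r = 1 \<and> s = p)"
  defines "d \<equiv> s - r + 1"
  obtains g where "0 < g" "eigengap lam p r s = ereal g"
    "\<And>t j. t < p - d \<Longrightarrow> j < d \<Longrightarrow> g \<le> \<bar>lam (outer_index r d t + 1) - lam (j + r)\<bar>"
proof -
  have "eigengap lam p r s \<noteq> \<infinity>" using partial unfolding eigengap_def by (auto simp: min_def)
  then obtain g where g: "eigengap lam p r s = ereal g" "0 < g" using gap by (cases "eigengap lam p r s") auto
  have left: "g \<le> lam (r - 1) - lam r" if "r \<noteq> 1"
  proof -
    have "eigengap lam p r s \<le> ereal (lam (r - 1) - lam r)" using that unfolding eigengap_def by simp
    then show ?thesis using g(1) by simp
  qed
  have right: "g \<le> lam s - lam (s + 1)" if "s \<noteq> p"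
  proof -
    have "eigengap lam p r s \<le> ereal (lam s - lam (s + 1))" using that unfolding eigengap_def by simp
    then show ?thesis using g(1) by simp
  qed
  have "g \<le> \<bar>lam (outer_index r d t + 1) - lam (j + r)\<bar>" if tj: "t < p - d" "j < d" for t j
  proof (cases "t < r - 1")
    case True
    then have "r \<noteq> 1" by auto
    moreover have "lam (r - 1) \<le> lam (t + 1)" "lam (j + r) \<le> lam r"
      using ls[of "t + 1" "r - 1"] ls[of r "j + r"] rs tj True unfolding d_def by auto
    ultimately show ?thesis using left True unfolding outer_index_def by auto
  next
    case False
    then have "lam (t + d + 1) \<le> lam (s + 1)" "lam s \<le> lam (j + r)" "s \<noteq> p"
      using ls[of "s + 1" "t + d + 1"] ls[of "j + r" s] rs tj unfolding d_def by auto
    then show ?thesis using right False unfolding outer_index_def by auto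
  qed
  then show ?thesis using that g by blast
qed

lemma perturbation_size:
  assumes E: "(E::real mat) \<in> carrier_mat p p" and p: "0 < p"
  shows "min (sqrt (real d) * op_norm E) (fro_norm E) = sqrt (min (real d * (op_norm E)\<^sup>2) (fro_sq E))"
proof -
  have "sqrt (real d * (op_norm E)\<^sup>2) = sqrt (real d) * op_norm E"
    using op_norm_nonneg[OF E p] by (simp add: real_sqrt_mult)
  moreover have "min (sqrt a) (sqrt b) = sqrt (min a b)" for a b by (simp add: min_def)
  ultimately show ?thesis unfolding fro_norm_fro_sq by metis
qed

lemma davis_kahan_quotients:
  assumes g: "0 < g" and m: "0 \<le> m"
    and X: "0 \<le> X" "g\<^sup>2 * X \<le> (2 * m)\<^sup>2" and Y: "0 \<le> Y" "Y \<le> 2 * X"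
  shows "ereal (sqrt X) \<le> ereal (2 * m) / ereal g"
    and "ereal (sqrt Y) \<le> ereal (2 powr (3/2) * m) / ereal g"
proof -
  have quotient: "ereal (sqrt Z) \<le> ereal (c * m) / ereal g"
    if Z: "0 \<le> Z" "g\<^sup>2 * Z \<le> (c * m)\<^sup>2" and c: "0 \<le> c" for Z c
  proof -
    have "(g * sqrt Z)\<^sup>2 = g\<^sup>2 * Z" using Z(1) by (simp add: power_mult_distrib)
    then have "(g * sqrt Z)\<^sup>2 \<le> (c * m)\<^sup>2" using Z(2) by simp
    then have "g * sqrt Z \<le> c * m" by (rule power2_le_imp_le) (simp add: c m)
    then have "sqrt Z \<le> c * m / g" using g by (simp add: pos_le_divide_eq mult.commute)
    then show ?thesis using g by simp
  qed
  show "ereal (sqrt X) \<le> ereal (2 * m) / ereal g" by (rule quotient[OF X]) simp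
  have "(2::real) powr (3/2) = 2 powr (1 + 1/2)" by simp
  also have "\<dots> = 2 powr 1 * 2 powr (1/2)" by (rule powr_add)
  finally have two_powr: "(2::real) powr (3/2) = 2 * sqrt 2" by (simp add: powr_half_sqrt)
  have "g\<^sup>2 * Y \<le> 2 * (g\<^sup>2 * X)" using mult_left_mono[OF Y(2), of "g\<^sup>2"] by (simp add: ac_simps)
  also have "\<dots> \<le> 2 * (2 * m)\<^sup>2" by (rule mult_left_mono[OF X(2)]) simp
  also have "\<dots> = (2 powr (3/2) * m)\<^sup>2" unfolding two_powr by (simp add: power_mult_distrib)
  finally show "ereal (sqrt Y) \<le> ereal (2 powr (3/2) * m) / ereal g" by (rule quotient[OF Y(1)]) simp
qed

text \<open>The theorem: the finite-gap case combines the squared Davis-Kahan estimate with the Procrustes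
  bound; if the block is everything, \<open>V\<close> and \<open>Vh\<close> span \<open>\<real>\<^sup>p\<close>, \<open>sin \<Theta> = 0\<close> and the gap is infinite.\<close>
theorem theorem2:
  fixes Sigma Sigmah V Vh :: "real mat"
    and lam lamh :: "nat \<Rightarrow> real"
    and p r s :: nat
  defines "d \<equiv> s - r + 1"
  assumes Sigma_carr: "Sigma \<in> carrier_mat p p" and Sigmah_carr: "Sigmah \<in> carrier_mat p p"
    and Sigma_sym: "transpose_mat Sigma = Sigma" and Sigmah_sym: "transpose_mat Sigmah = Sigmah"
    and lam_sorted: "\<And>i j. 1 \<le> i \<Longrightarrow> i \<le> j \<Longrightarrow> j \<le> p \<Longrightarrow> lam j \<le> lam i"
    and lamh_sorted: "\<And>i j. 1 \<le> i \<Longrightarrow> i \<le> j \<Longrightarrow> j \<le> p \<Longrightarrow> lamh j \<le> lamh i"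
    and lam_eig: "char_poly Sigma = (\<Prod>i\<in>{1..p}. [:- lam i, 1:])"
    and lamh_eig: "char_poly Sigmah = (\<Prod>i\<in>{1..p}. [:- lamh i, 1:])"
    and rs: "1 \<le> r" "r \<le> s" "s \<le> p"
    and gap_pos: "eigengap lam p r s > 0"
    and V_carr: "V \<in> carrier_mat p d" and Vh_carr: "Vh \<in> carrier_mat p d"
    and V_on: "orthonormal_cols V" and Vh_on: "orthonormal_cols Vh"
    and V_eig: "\<And>j. r \<le> j \<Longrightarrow> j \<le> s \<Longrightarrow> Sigma *\<^sub>v col V (j - r) = lam j \<cdot>\<^sub>v col V (j - r)"
    and Vh_eig: "\<And>j. r \<le> j \<Longrightarrow> j \<le> s \<Longrightarrow> Sigmah *\<^sub>v col Vh (j - r) = lamh j \<cdot>\<^sub>v col Vh (j - r)"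
  shows "ereal (fro_norm (sin_theta Vh V))
           \<le> ereal (2 * min (sqrt (real d) * op_norm (Sigmah - Sigma)) (fro_norm (Sigmah - Sigma)))
              / eigengap lam p r s
         \<and> (\<exists>Oh \<in> carrier_mat d d. transpose_mat Oh * Oh = 1\<^sub>m d \<and>
           ereal (fro_norm (Vh * Oh - V))
           \<le> ereal (2 powr (3/2) * min (sqrt (real d) * op_norm (Sigmah - Sigma)) (fro_norm (Sigmah - Sigma)))
              / eigengap lam p r s)"
proof -
  have r: "1 \<le> r" "r + d \<le> p + 1" and dp: "d \<le> p" "0 < p" unfolding d_def using rs by auto
  have Veig: "\<And>j. j < d \<Longrightarrow> Sigma *\<^sub>v col V j = lam (j + r) \<cdot>\<^sub>v col V j"
    and Vheig: "\<And>j. j < d \<Longrightarrow> Sigmah *\<^sub>v col Vh j = lamh (j + r) \<cdot>\<^sub>v col Vh j"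
    using V_eig[of "_ + r"] Vh_eig[of "_ + r"] rs unfolding d_def by auto
  obtain u where u: "orthonormal_family p {..<p} u" "\<And>k. k < p \<Longrightarrow> Sigma *\<^sub>v u k = lam (Suc k) \<cdot>\<^sub>v u k"
    using ordered_eigenbasis[OF Sigma_carr Sigma_sym lam_eig] by blast
  obtain uh where uh: "orthonormal_family p {..<p} uh" "\<And>k. k < p \<Longrightarrow> Sigmah *\<^sub>v uh k = lamh (Suc k) \<cdot>\<^sub>v uh k"
    using ordered_eigenbasis[OF Sigmah_carr Sigmah_sym lamh_eig] by blast
  have E: "Sigmah - Sigma \<in> carrier_mat p p" using Sigma_carr Sigmah_carr by auto
  define m where "m = sqrt (min (real d * (op_norm (Sigmah - Sigma))\<^sup>2) (fro_sq (Sigmah - Sigma)))"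
  have m: "0 \<le> m" "m\<^sup>2 = min (real d * (op_norm (Sigmah - Sigma))\<^sup>2) (fro_sq (Sigmah - Sigma))"
    unfolding m_def using fro_sq_nonneg[of "Sigmah - Sigma"] by simp_all
  have m_eq: "min (sqrt (real d) * op_norm (Sigmah - Sigma)) (fro_norm (Sigmah - Sigma)) = m"
    unfolding m_def by (rule perturbation_size[OF E dp(2)])
  obtain Oh where Oh: "Oh \<in> carrier_mat d d" "transpose_mat Oh * Oh = 1\<^sub>m d"
    "fro_sq (Vh * Oh - V) \<le> 2 * fro_sq (sin_theta Vh V)"
    using procrustes_sin_theta[OF V_carr V_on Vh_carr Vh_on dp(1)] by blast
  show ?thesis
  proof (cases "r = 1 \<and> s = p")
    case True
    then have "fro_sq (sin_theta Vh V) = 0"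
      using sin_theta_outer_mass[OF Sigma_carr Sigma_sym V_carr V_on Vh_carr Vh_on Veig u r]
      unfolding d_def by simp
    then have "fro_norm (sin_theta Vh V) = 0" "fro_norm (Vh * Oh - V) = 0"
      using Oh(3) fro_sq_nonneg[of "Vh * Oh - V"] by (simp_all add: fro_norm_fro_sq)
    moreover have "eigengap lam p r s = \<infinity>" using True unfolding eigengap_def by simp
    ultimately show ?thesis unfolding m_eq using Oh(1,2) by auto
  next
    case False
    then obtain g where g: "0 < g" "eigengap lam p r s = ereal g"
      "\<And>t j. t < p - d \<Longrightarrow> j < d \<Longrightarrow> g \<le> \<bar>lam (outer_index r d t + 1) - lam (j + r)\<bar>"
      using eigengap_separation[OF lam_sorted rs gap_pos] unfolding d_def by blast
    have "g\<^sup>2 * fro_sq (sin_theta Vh V) \<le> (2 * m)\<^sup>2"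
      using davis_kahan_squared[OF Sigma_carr Sigma_sym Sigmah_carr Sigmah_sym V_carr V_on Vh_carr Vh_on
          Veig Vheig u uh lam_sorted lamh_sorted r g(3,1)]
      by (simp add: power_mult_distrib m(2))
    from davis_kahan_quotients[OF g(1) m(1) fro_sq_nonneg this fro_sq_nonneg Oh(3)]
    have "ereal (fro_norm (sin_theta Vh V)) \<le> ereal (2 * m) / ereal g"
      "ereal (fro_norm (Vh * Oh - V)) \<le> ereal (2 powr (3/2) * m) / ereal g"
      unfolding fro_norm_fro_sq .
    then show ?thesis unfolding m_eq g(2) using Oh(1,2) by blast
  qed
qed

end
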